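(* Let $f:\{0,1\}^n\times\{0,1\}^n\to\{0,1\}$ be a total Boolean function and let $E\subseteq V=\{(z,z):z\in\{0,1\}^n\}$. Let $\kappa_0=|E|$ and $\kappa_1=\sum_{(z,z)\in E}|\hat{f}_{z,z}|$. Then (asymptotically in $n$): if $\kappa_1\ge\Omega(\sqrt{\kappa_0})$, then $BQC(f)=\Omega(\log\kappa_1)$; if $\kappa_1\le O(\sqrt{\kappa_0})$, then \[BQC(f)=\Omega\!\left(\frac{\log\kappa_1}{\log(\sqrt{\kappa_0})-\log\kappa_1+1}\right).\]
   Context: Fourier coefficients of $f:\{0,1\}^n\times\{0,1\}^n\to\mathbb{R}$: $\hat{f}_{z,z'}=2^{-2n}\sum_{x,y}f(x,y)(-1)^{\sum_i x_iz_i+\sum_i y_iz'_i}$. $\log$ is base 2. Quantum communication model (Yao, no prior entanglement): Alice receives $x$, Bob $y$; each holds private qubits initialized to the input and $|0\rangle$; in each round one player applies a unitary to his qubits and sends one qubit; at the end a qubit is measured giving the output; the cost is the number of qubits exchanged. $BQC(f)$ is the minimum cost of a quantum protocol computing $f$ with error probability at most $1/3$ on every input. *)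

theory Defs
  imports Complex_Main
begin

text \<open>Elements of {0,1}^n are bool lists of length n (True = 1).\<close>
definition cube :: "nat \<Rightarrow> bool list set" where
  "cube n = {xs. length xs = n}"

definition fourier :: "nat \<Rightarrow> (bool list \<Rightarrow> bool list \<Rightarrow> bool) \<Rightarrow> bool list \<Rightarrow> bool list \<Rightarrow> real" where
  "fourier n f z z' = (1 / 2 ^ (2 * n)) *
     (\<Sum>x\<in>cube n. \<Sum>y\<in>cube n. (if f x y then 1 else 0) *
        (-1) ^ (card {i. i < n \<and> x ! i \<and> z ! i} + card {i. i < n \<and> y ! i \<and> z' ! i}))"

text \<open>The global system consists of m qubits, numbered 0..m-1; computational
 basis states are bool lists of length m. An operator is given by its matrix
 entries U b b' (row b, column b').\<close>

type_synonym qop = "bool list \<Rightarrow> bool list \<Rightarrow> complex"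

definition unitary_op :: "nat \<Rightarrow> qop \<Rightarrow> bool" where
  "unitary_op m U \<longleftrightarrow> (\<forall>b\<in>cube m. \<forall>b'\<in>cube m.
      (\<Sum>c\<in>cube m. cnj (U c b) * U c b') = (if b = b' then 1 else 0))"

text \<open>U acts only on the qubits in S, i.e. U = L \<otimes> Id on the complement of S.\<close>
definition local_op :: "nat \<Rightarrow> nat set \<Rightarrow> qop \<Rightarrow> bool" where
  "local_op m S U \<longleftrightarrow>
     (\<forall>b\<in>cube m. \<forall>b'\<in>cube m. (\<exists>i<m. i \<notin> S \<and> b ! i \<noteq> b' ! i) \<longrightarrow> U b b' = 0) \<and>
     (\<forall>b\<in>cube m. \<forall>b'\<in>cube m. \<forall>c\<in>cube m. \<forall>c'\<in>cube m.
        (\<forall>i\<in>S. b ! i = c ! i \<and> b' ! i = c' ! i) \<and>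
        (\<forall>i<m. i \<notin> S \<longrightarrow> b ! i = b' ! i \<and> c ! i = c' ! i) \<longrightarrow> U b b' = U c c')"

definition apply_op :: "nat \<Rightarrow> qop \<Rightarrow> (bool list \<Rightarrow> complex) \<Rightarrow> (bool list \<Rightarrow> complex)" where
  "apply_op m U \<psi> = (\<lambda>b. \<Sum>b'\<in>cube m. U b b' * \<psi> b')"

text \<open>A round (p, U, q): if p = True, Alice applies U to the qubits she holds and
 then sends qubit q to Bob; if p = False, Bob does so and sends q to Alice.
 The set A is the set of qubits currently held by Alice; Bob holds {0..<m} - A.\<close>

fun valid_rounds :: "nat \<Rightarrow> nat set \<Rightarrow> (bool \<times> qop \<times> nat) list \<Rightarrow> bool" where
  "valid_rounds m A [] = True"
| "valid_rounds m A ((p, U, q) # rs) =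
     (let S = (if p then A else {0..<m} - A) in
       unitary_op m U \<and> local_op m S U \<and> q \<in> S \<and>
       valid_rounds m (if p then A - {q} else A \<union> {q}) rs)"

fun run_rounds :: "nat \<Rightarrow> (bool \<times> qop \<times> nat) list \<Rightarrow> (bool list \<Rightarrow> complex) \<Rightarrow> (bool list \<Rightarrow> complex)" where
  "run_rounds m [] \<psi> = \<psi>"
| "run_rounds m ((p, U, q) # rs) \<psi> = run_rounds m rs (apply_op m U \<psi>)"

text \<open>Initial state on inputs x, y: qubits 0..n-1 hold x (Alice), qubits n..2n-1
 hold y (Bob), all others are |0>.\<close>
definition init_state :: "nat \<Rightarrow> bool list \<Rightarrow> bool list \<Rightarrow> bool list \<Rightarrow> complex" where
  "init_state m x y = (\<lambda>b. if b = x @ y @ replicate (m - length x - length y) False then 1 else 0)"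

definition meas_prob :: "nat \<Rightarrow> nat \<Rightarrow> (bool list \<Rightarrow> complex) \<Rightarrow> bool \<Rightarrow> real" where
  "meas_prob m out \<psi> v = (\<Sum>b\<in>{b\<in>cube m. b ! out = v}. (cmod (\<psi> b))\<^sup>2)"

definition computes :: "nat \<Rightarrow> (bool list \<Rightarrow> bool list \<Rightarrow> bool) \<Rightarrow>
    nat \<Rightarrow> nat set \<Rightarrow> (bool \<times> qop \<times> nat) list \<Rightarrow> nat \<Rightarrow> bool" where
  "computes n f m A0 rs out \<longleftrightarrow>
     2 * n \<le> m \<and> {0..<n} \<subseteq> A0 \<and> A0 \<subseteq> {0..<m} \<and> A0 \<inter> {n..<2*n} = {} \<and>
     out < m \<and> valid_rounds m A0 rs \<and>
     (\<forall>x\<in>cube n. \<forall>y\<in>cube n.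
        meas_prob m out (run_rounds m rs (init_state m x y)) (f x y) \<ge> 2 / 3)"

definition BQC :: "nat \<Rightarrow> (bool list \<Rightarrow> bool list \<Rightarrow> bool) \<Rightarrow> nat" where
  "BQC n f = (LEAST k. \<exists>m A0 rs out. computes n f m A0 rs out \<and> length rs = k)"

definition kappa0 :: "bool list set \<Rightarrow> real" where
  "kappa0 E = real (card E)"

definition kappa1 :: "nat \<Rightarrow> (bool list \<Rightarrow> bool list \<Rightarrow> bool) \<Rightarrow> bool list set \<Rightarrow> real" where
  "kappa1 n f E = (\<Sum>z\<in>E. \<bar>fourier n f z z\<bar>)"

end

(*
  After t qubits of communication the joint state is a sum of 2^t products of a state of
  Alice's register depending only on x and a state of Bob's register depending only on y,
  each of norm at most 1 (Yao, Kremer).  Hence the acceptance probability is a sum of 4^t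
  products of bounded functions of x and of y, so its nu-norm is at most 2 * 4^t.  A majority
  vote over 2r runs keeps the nu-norm below (4^(t+1) + 1)^(2r) and approximates f up to
  (8/9)^r.  By Bessel's inequality the diagonal Fourier coefficients of a product a(x) b(y)
  with |a|, |b| <= 1 have l1-sum at most 1, so kappa1 of the approximation is at most its
  nu-norm, while by Bessel and Cauchy-Schwarz the error adds at most (8/9)^r sqrt kappa0.
  Taking r proportional to log (sqrt kappa0 / kappa1) + 1 yields both bounds.
*)
theory Submission
  imports Defs "HOL-Analysis.Convex"
begin

section \<open>Walsh characters and Fourier coefficients on the cube\<close>

lemma cube_eq_lists: "cube n = {xs. set xs \<subseteq> UNIV \<and> length xs = n}"
  by (simp add: cube_def)

lemma finite_cube [simp]: "finite (cube n)"
  unfolding cube_eq_lists by (rule finite_lists_length_eq) simp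

lemma card_cube: "card (cube n) = 2 ^ n"
  using card_lists_length_eq[of "UNIV :: bool set" n] unfolding cube_eq_lists by simp

lemma cube_Suc: "cube (Suc n) = Cons True ` cube n \<union> Cons False ` cube n"
  by (auto simp: cube_def length_Suc_conv)

lemma sum_cube_Suc:
  "(\<Sum>x\<in>cube (Suc n). F x) = (\<Sum>x\<in>cube n. F (True # x)) + (\<Sum>x\<in>cube n. F (False # x))"
  unfolding cube_Suc by (subst sum.union_disjoint) (auto simp: sum.reindex)

definition walsh :: "nat \<Rightarrow> bool list \<Rightarrow> bool list \<Rightarrow> real" where
  "walsh n z x = (-1) ^ card {i. i < n \<and> x ! i \<and> z ! i}"

lemma card_less_Suc_conj:
  "card {i. i < Suc n \<and> P i} = of_bool (P 0) + card {i. i < n \<and> P (Suc i)}"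
proof -
  have "{i. i < Suc n \<and> P i} = (if P 0 then {0} else {}) \<union> Suc ` {i. i < n \<and> P (Suc i)}"
    by (auto simp: less_Suc_eq_0_disj)
  then show ?thesis
    by (simp add: card_Un_disjoint card_image)
qed

lemma walsh_Cons: "walsh (Suc n) (b # z) (a # x) = (if a \<and> b then -1 else 1) * walsh n z x"
  unfolding walsh_def card_less_Suc_conj by (simp add: power_add)

lemma walsh_orthogonal:
  "z \<in> cube n \<Longrightarrow> w \<in> cube n \<Longrightarrow>
   (\<Sum>x\<in>cube n. walsh n z x * walsh n w x) = (if z = w then 2 ^ n else 0)"
proof (induction n arbitrary: z w)
  case 0
  then show ?case by (simp add: cube_def walsh_def)
next
  case (Suc n)
  obtain b z' where z: "z = b # z'" "z' \<in> cube n"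
    using Suc.prems by (cases z) (auto simp: cube_def)
  obtain c w' where w: "w = c # w'" "w' \<in> cube n"
    using Suc.prems by (cases w) (auto simp: cube_def)
  have "(\<Sum>x\<in>cube (Suc n). walsh (Suc n) z x * walsh (Suc n) w x)
     = ((if b then -1 else 1) * (if c then -1 else 1) + 1) * (\<Sum>x\<in>cube n. walsh n z' x * walsh n w' x)"
    unfolding sum_cube_Suc z w walsh_Cons by (simp add: algebra_simps sum_distrib_left sum_negf)
  also have "\<dots> = (if z = w then 2 ^ Suc n else 0)"
    using Suc.IH[OF z(2) w(2)] z w by auto
  finally show ?case .
qed

lemma bessel_inequality:
  fixes G :: "'d \<Rightarrow> real" and \<phi> :: "'e \<Rightarrow> 'd \<Rightarrow> real"
  assumes "finite E" and "N > 0"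
    and orth: "\<And>z w. z \<in> E \<Longrightarrow> w \<in> E \<Longrightarrow> (\<Sum>d\<in>D. \<phi> z d * \<phi> w d) = (if z = w then N else 0)"
  shows "(\<Sum>z\<in>E. ((\<Sum>d\<in>D. G d * \<phi> z d) / N)\<^sup>2) \<le> (\<Sum>d\<in>D. (G d)\<^sup>2) / N"
proof -
  define c where "c z = (\<Sum>d\<in>D. G d * \<phi> z d) / N" for z
  define P where "P d = (\<Sum>z\<in>E. c z * \<phi> z d)" for d
  have cN: "(\<Sum>d\<in>D. G d * \<phi> z d) = N * c z" for z
    using \<open>N > 0\<close> by (simp add: c_def)
  have cross: "(\<Sum>d\<in>D. G d * P d) = N * (\<Sum>z\<in>E. (c z)\<^sup>2)"
  proof -
    have "(\<Sum>d\<in>D. G d * P d) = (\<Sum>z\<in>E. c z * (\<Sum>d\<in>D. G d * \<phi> z d))"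
      unfolding P_def by (simp add: sum_distrib_left sum.swap[of _ D] algebra_simps)
    also have "\<dots> = N * (\<Sum>z\<in>E. (c z)\<^sup>2)"
      by (simp add: cN sum_distrib_left power2_eq_square algebra_simps)
    finally show ?thesis .
  qed
  have "(\<Sum>d\<in>D. (P d)\<^sup>2) = (\<Sum>d\<in>D. \<Sum>z\<in>E. \<Sum>w\<in>E. c z * c w * (\<phi> z d * \<phi> w d))"
    by (simp add: P_def power2_eq_square sum_product algebra_simps)
  also have "\<dots> = (\<Sum>z\<in>E. \<Sum>w\<in>E. c z * c w * (\<Sum>d\<in>D. \<phi> z d * \<phi> w d))"
    by (simp add: sum.swap[of _ D] sum_distrib_left)
  also have "\<dots> = (\<Sum>z\<in>E. c z * c z * N)"
    using \<open>finite E\<close> by (simp add: orth if_distrib cong: if_cong)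
  finally have square: "(\<Sum>d\<in>D. (P d)\<^sup>2) = N * (\<Sum>z\<in>E. (c z)\<^sup>2)"
    by (simp add: sum_distrib_left power2_eq_square algebra_simps)
  have "0 \<le> (\<Sum>d\<in>D. (G d - P d)\<^sup>2)"
    by (simp add: sum_nonneg)
  also have "\<dots> = (\<Sum>d\<in>D. (G d)\<^sup>2) - N * (\<Sum>z\<in>E. (c z)\<^sup>2)"
    by (simp add: power2_diff sum.distrib sum_subtractf sum_distrib_left[symmetric] cross square
        sum_distrib_right[symmetric] mult.assoc)
  finally show ?thesis
    using \<open>N > 0\<close> by (simp add: c_def field_simps)
qed

definition fourier1 :: "nat \<Rightarrow> (bool list \<Rightarrow> real) \<Rightarrow> bool list \<Rightarrow> real" where
  "fourier1 n A z = (\<Sum>x\<in>cube n. A x * walsh n z x) / 2 ^ n"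

definition fourier_diag :: "nat \<Rightarrow> (bool list \<Rightarrow> bool list \<Rightarrow> real) \<Rightarrow> bool list \<Rightarrow> real" where
  "fourier_diag n F z = (\<Sum>x\<in>cube n. \<Sum>y\<in>cube n. F x y * walsh n z x * walsh n z y) / 2 ^ (2 * n)"

lemma fourier_eq_fourier_diag: "fourier n f z z = fourier_diag n (\<lambda>x y. of_bool (f x y)) z"
  unfolding fourier_def fourier_diag_def walsh_def of_bool_def
  by (simp add: power_add sum_divide_distrib mult.assoc)

lemma fourier_diag_cong:
  "(\<And>x y. x \<in> cube n \<Longrightarrow> y \<in> cube n \<Longrightarrow> F x y = G x y) \<Longrightarrow> fourier_diag n F z = fourier_diag n G z"
  unfolding fourier_diag_def by (intro arg_cong[where f="\<lambda>t. t / _"] sum.cong refl) auto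

lemma fourier_diag_add: "fourier_diag n (\<lambda>x y. F x y + G x y) z = fourier_diag n F z + fourier_diag n G z"
  unfolding fourier_diag_def by (simp add: sum.distrib algebra_simps add_divide_distrib)

lemma fourier_diag_rect: "fourier_diag n (\<lambda>x y. A x * B y) z = fourier1 n A z * fourier1 n B z"
proof -
  have "fourier1 n A z * fourier1 n B z
      = (\<Sum>x\<in>cube n. A x * walsh n z x) * (\<Sum>y\<in>cube n. B y * walsh n z y) / 2 ^ (2 * n)"
    by (simp add: fourier1_def power_add mult_2)
  also have "\<dots> = fourier_diag n (\<lambda>x y. A x * B y) z"
    unfolding fourier_diag_def sum_product by (simp add: mult_ac)
  finally show ?thesis ..
qed

lemma sum_fourier1_square_le:
  assumes "E \<subseteq> cube n" and "\<And>x. x \<in> cube n \<Longrightarrow> \<bar>A x\<bar> \<le> 1"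
  shows "(\<Sum>z\<in>E. (fourier1 n A z)\<^sup>2) \<le> 1"
proof -
  have "(\<Sum>z\<in>E. (fourier1 n A z)\<^sup>2) \<le> (\<Sum>x\<in>cube n. (A x)\<^sup>2) / 2 ^ n"
    unfolding fourier1_def
    by (rule bessel_inequality)
      (use finite_subset[OF assms(1)] walsh_orthogonal assms(1) in \<open>auto simp: subset_iff\<close>)
  also have "\<dots> \<le> (\<Sum>x\<in>cube n. 1) / 2 ^ n"
    using assms(2) by (intro divide_right_mono sum_mono) (auto simp: abs_square_le_1)
  finally show ?thesis
    by (simp add: card_cube)
qed

lemma sum_fourier_diag_square_le:
  assumes "E \<subseteq> cube n" and "\<And>x y. x \<in> cube n \<Longrightarrow> y \<in> cube n \<Longrightarrow> \<bar>G x y\<bar> \<le> e"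
  shows "(\<Sum>z\<in>E. (fourier_diag n G z)\<^sup>2) \<le> e\<^sup>2"
proof -
  let ?\<chi> = "\<lambda>z p. walsh n z (fst p) * walsh n z (snd p)"
  have orth: "(\<Sum>p\<in>cube n \<times> cube n. ?\<chi> z p * ?\<chi> w p) = (if z = w then 2 ^ (2 * n) else 0)"
    if "z \<in> E" "w \<in> E" for z w
  proof -
    have "(\<Sum>p\<in>cube n \<times> cube n. ?\<chi> z p * ?\<chi> w p)
       = (\<Sum>x\<in>cube n. walsh n z x * walsh n w x) * (\<Sum>y\<in>cube n. walsh n z y * walsh n w y)"
      by (simp add: sum.cartesian_product split_def sum_product algebra_simps)
    then show ?thesis
      using walsh_orthogonal[of z n w] that assms(1) by (auto simp: power_add mult_2 subset_iff)
  qed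
  have square_le: "(G x y)\<^sup>2 \<le> e\<^sup>2" if "x \<in> cube n" "y \<in> cube n" for x y
    using power_mono[OF assms(2)[OF that] abs_ge_zero, of 2] by simp
  have "fourier_diag n G z = (\<Sum>p\<in>cube n \<times> cube n. case_prod G p * ?\<chi> z p) / 2 ^ (2 * n)" for z
    unfolding fourier_diag_def by (simp add: sum.cartesian_product split_def algebra_simps)
  then have "(\<Sum>z\<in>E. (fourier_diag n G z)\<^sup>2) \<le> (\<Sum>p\<in>cube n \<times> cube n. (case_prod G p)\<^sup>2) / 2 ^ (2 * n)"
    using bessel_inequality[OF finite_subset[OF assms(1) finite_cube] _ orth, of "case_prod G"] by simp
  also have "\<dots> \<le> (\<Sum>p\<in>cube n \<times> cube n. e\<^sup>2) / 2 ^ (2 * n)"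
    using square_le by (intro divide_right_mono sum_mono) (auto simp: split_def)
  also have "\<dots> = e\<^sup>2"
    by (simp add: card_cube card_cartesian_product power_add mult_2)
  finally show ?thesis .
qed

lemma sum_abs_fourier_diag_le:
  assumes "E \<subseteq> cube n" and "\<And>x y. x \<in> cube n \<Longrightarrow> y \<in> cube n \<Longrightarrow> \<bar>G x y\<bar> \<le> e"
  shows "(\<Sum>z\<in>E. \<bar>fourier_diag n G z\<bar>) \<le> e * sqrt (card E)"
proof -
  have "\<bar>G (replicate n False) (replicate n False)\<bar> \<le> e"
    by (rule assms(2)) (simp_all add: cube_def)
  then have "0 \<le> e"
    by linarith
  have "(\<Sum>z\<in>E. \<bar>fourier_diag n G z\<bar>)\<^sup>2 \<le> (\<Sum>z\<in>E. \<bar>fourier_diag n G z\<bar>\<^sup>2) * card E"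
    by (fact sum_squared_le_sum_of_squares)
  also have "\<dots> \<le> e\<^sup>2 * card E"
    using sum_fourier_diag_square_le[OF assms] by (intro mult_right_mono) simp_all
  also have "\<dots> = (e * sqrt (card E))\<^sup>2"
    by (simp add: power_mult_distrib)
  finally show ?thesis
    using \<open>0 \<le> e\<close> by (rule power2_le_imp_le[OF _ mult_nonneg_nonneg]) simp
qed

lemma sum_abs_fourier1_mult_le:
  assumes "E \<subseteq> cube n" and "\<And>x. x \<in> cube n \<Longrightarrow> \<bar>A x\<bar> \<le> 1" and "\<And>x. x \<in> cube n \<Longrightarrow> \<bar>B x\<bar> \<le> 1"
  shows "(\<Sum>z\<in>E. \<bar>fourier1 n A z * fourier1 n B z\<bar>) \<le> 1"
proof -
  have "(\<Sum>z\<in>E. \<bar>fourier1 n A z * fourier1 n B z\<bar>)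
      \<le> (\<Sum>z\<in>E. ((fourier1 n A z)\<^sup>2 + (fourier1 n B z)\<^sup>2) / 2)"
  proof (rule sum_mono)
    fix z
    show "\<bar>fourier1 n A z * fourier1 n B z\<bar> \<le> ((fourier1 n A z)\<^sup>2 + (fourier1 n B z)\<^sup>2) / 2"
      using sum_squares_bound[of "\<bar>fourier1 n A z\<bar>" "\<bar>fourier1 n B z\<bar>"] by (simp add: abs_mult)
  qed
  also have "\<dots> = ((\<Sum>z\<in>E. (fourier1 n A z)\<^sup>2) + (\<Sum>z\<in>E. (fourier1 n B z)\<^sup>2)) / 2"
    by (simp only: sum_divide_distrib[symmetric] sum.distrib)
  also have "\<dots> \<le> 1"
    using sum_fourier1_square_le[of E n A] sum_fourier1_square_le[of E n B] assms by simp
  finally show ?thesis .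
qed

section \<open>The \<open>\<nu>\<close>-norm of a matrix on the cube\<close>

text \<open>The least \<open>W\<close> with \<open>nu_bounded n W F\<close> is the \<open>\<nu>\<close>-norm of Linial and Shraibman,
  the projective tensor norm of \<open>F\<close> in \<open>\<ell>\<^sub>\<infinity> \<otimes> \<ell>\<^sub>\<infinity>\<close>.\<close>

inductive nu_bounded :: "nat \<Rightarrow> real \<Rightarrow> (bool list \<Rightarrow> bool list \<Rightarrow> real) \<Rightarrow> bool" for n :: nat where
  zero: "nu_bounded n 0 (\<lambda>x y. 0)"
| add_rect: "nu_bounded n W F \<Longrightarrow> (\<And>x. x \<in> cube n \<Longrightarrow> \<bar>a x\<bar> \<le> 1) \<Longrightarrow> (\<And>y. y \<in> cube n \<Longrightarrow> \<bar>b y\<bar> \<le> 1) \<Longrightarrow>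
    nu_bounded n (W + \<bar>w\<bar>) (\<lambda>x y. F x y + w * a x * b y)"
| weaken: "nu_bounded n W F \<Longrightarrow> W \<le> W' \<Longrightarrow> (\<And>x y. x \<in> cube n \<Longrightarrow> y \<in> cube n \<Longrightarrow> F x y = G x y) \<Longrightarrow>
    nu_bounded n W' G"

lemma nu_bounded_nonneg: "nu_bounded n W F \<Longrightarrow> 0 \<le> W"
  by (induction rule: nu_bounded.induct) auto

lemma nu_bounded_cong:
  "nu_bounded n W F \<Longrightarrow> (\<And>x y. x \<in> cube n \<Longrightarrow> y \<in> cube n \<Longrightarrow> F x y = G x y) \<Longrightarrow> nu_bounded n W G"
  by (erule nu_bounded.weaken) simp_all

lemma nu_bounded_mono: "nu_bounded n W F \<Longrightarrow> W \<le> W' \<Longrightarrow> nu_bounded n W' F"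
  by (erule nu_bounded.weaken) simp_all

lemma nu_bounded_rect:
  assumes "\<And>x. x \<in> cube n \<Longrightarrow> \<bar>a x\<bar> \<le> 1" and "\<And>y. y \<in> cube n \<Longrightarrow> \<bar>b y\<bar> \<le> 1"
  shows "nu_bounded n \<bar>w\<bar> (\<lambda>x y. w * a x * b y)"
  using nu_bounded.add_rect[OF nu_bounded.zero assms, where w = w] by simp

lemma nu_bounded_const: "nu_bounded n \<bar>c\<bar> (\<lambda>x y. c)"
  using nu_bounded_rect[of n "\<lambda>_. 1" "\<lambda>_. 1" c] by simp

lemma nu_bounded_add:
  assumes "nu_bounded n V F" and "nu_bounded n W G"
  shows "nu_bounded n (V + W) (\<lambda>x y. F x y + G x y)"
  using assms(2)
proof (induction rule: nu_bounded.induct)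
  case zero
  then show ?case using assms(1) by simp
next
  case (add_rect W G a b w)
  then show ?case
    using nu_bounded.add_rect[OF add_rect.IH add_rect.hyps(2,3), where w = w] by (simp add: ac_simps)
next
  case (weaken W G W' G')
  show ?case
    by (rule nu_bounded.weaken[OF weaken.IH]) (use weaken.hyps in auto)
qed

lemma nu_bounded_scale: "nu_bounded n W F \<Longrightarrow> nu_bounded n (\<bar>c\<bar> * W) (\<lambda>x y. c * F x y)"
proof (induction rule: nu_bounded.induct)
  case zero
  then show ?case using nu_bounded.zero by simp
next
  case (add_rect W F a b w)
  then show ?case
    using nu_bounded.add_rect[OF add_rect.IH add_rect.hyps(2,3), where w = "c * w"]
    by (simp add: abs_mult algebra_simps)
next
  case (weaken W F W' G)
  show ?case
    by (rule nu_bounded.weaken[OF weaken.IH]) (use weaken.hyps in \<open>auto intro: mult_left_mono\<close>)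
qed

lemma nu_bounded_rect_mult:
  assumes "nu_bounded n W G"
    and "\<And>x. x \<in> cube n \<Longrightarrow> \<bar>a x\<bar> \<le> 1" and "\<And>y. y \<in> cube n \<Longrightarrow> \<bar>b y\<bar> \<le> 1"
  shows "nu_bounded n (\<bar>w\<bar> * W) (\<lambda>x y. w * a x * b y * G x y)"
  using assms(1)
proof (induction rule: nu_bounded.induct)
  case zero
  then show ?case using nu_bounded.zero by simp
next
  case (add_rect W G a' b' w')
  have "\<bar>a x * a' x\<bar> \<le> 1" if "x \<in> cube n" for x
    using assms(2) add_rect.hyps(2) that by (simp add: abs_mult mult_le_one)
  moreover have "\<bar>b y * b' y\<bar> \<le> 1" if "y \<in> cube n" for y
    using assms(3) add_rect.hyps(3) that by (simp add: abs_mult mult_le_one)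
  ultimately show ?case
    using nu_bounded.add_rect[OF add_rect.IH, where a = "\<lambda>x. a x * a' x" and b = "\<lambda>y. b y * b' y" and w = "w * w'"]
    by (simp add: abs_mult algebra_simps)
next
  case (weaken W G W' G')
  show ?case
    by (rule nu_bounded.weaken[OF weaken.IH]) (use weaken.hyps in \<open>auto intro: mult_left_mono\<close>)
qed

lemma nu_bounded_mult:
  assumes "nu_bounded n V F" and "nu_bounded n W G"
  shows "nu_bounded n (V * W) (\<lambda>x y. F x y * G x y)"
  using assms(1)
proof (induction rule: nu_bounded.induct)
  case zero
  then show ?case using nu_bounded.zero by simp
next
  case (add_rect V F a b w)
  have "nu_bounded n (\<bar>w\<bar> * W) (\<lambda>x y. w * a x * b y * G x y)"
    using assms(2) add_rect.hyps(2,3) by (rule nu_bounded_rect_mult)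
  from nu_bounded_add[OF add_rect.IH this] show ?case
    by (simp add: algebra_simps)
next
  case (weaken V F V' F')
  show ?case
    by (rule nu_bounded.weaken[OF weaken.IH])
      (use weaken.hyps nu_bounded_nonneg[OF assms(2)] in \<open>auto intro: mult_right_mono\<close>)
qed

lemma nu_bounded_power: "nu_bounded n W F \<Longrightarrow> nu_bounded n (W ^ k) (\<lambda>x y. F x y ^ k)"
  by (induction k) (use nu_bounded_const[of n 1] nu_bounded_mult in auto)

lemma nu_bounded_sum:
  "finite J \<Longrightarrow> (\<And>j. j \<in> J \<Longrightarrow> nu_bounded n (W j) (F j)) \<Longrightarrow>
   nu_bounded n (\<Sum>j\<in>J. W j) (\<lambda>x y. \<Sum>j\<in>J. F j x y)"
  by (induction J rule: finite_induct) (auto intro: nu_bounded.zero nu_bounded_add)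

lemma nu_bounded_Re_mult:
  assumes "\<And>x. x \<in> cube n \<Longrightarrow> cmod (G x) \<le> 1" and "\<And>y. y \<in> cube n \<Longrightarrow> cmod (H y) \<le> 1"
  shows "nu_bounded n 2 (\<lambda>x y. Re (G x * H y))"
proof -
  have "nu_bounded n (\<bar>1\<bar> + \<bar>-1\<bar>) (\<lambda>x y. 1 * Re (G x) * Re (H y) + (-1) * Im (G x) * Im (H y))"
    using assms by (intro nu_bounded_add nu_bounded_rect) (auto intro: order_trans[OF abs_Re_le_cmod] order_trans[OF abs_Im_le_cmod])
  then show ?thesis
    by simp
qed

lemma nu_bounded_sum_abs_fourier_diag:
  assumes "nu_bounded n W F" and "E \<subseteq> cube n"
  shows "(\<Sum>z\<in>E. \<bar>fourier_diag n F z\<bar>) \<le> W"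
  using assms(1)
proof (induction rule: nu_bounded.induct)
  case zero
  then show ?case by (simp add: fourier_diag_def)
next
  case (add_rect W F a b w)
  have scaled: "fourier1 n (\<lambda>x. w * a x) z = w * fourier1 n a z" for z
    unfolding fourier1_def by (simp add: sum_distrib_left mult.assoc)
  have rect: "fourier_diag n (\<lambda>x y. w * a x * b y) z = w * (fourier1 n a z * fourier1 n b z)" for z
    using fourier_diag_rect[of n "\<lambda>x. w * a x" b z] by (simp only: scaled mult.assoc)
  have "(\<Sum>z\<in>E. \<bar>fourier_diag n (\<lambda>x y. F x y + w * a x * b y) z\<bar>)
      \<le> (\<Sum>z\<in>E. \<bar>fourier_diag n F z\<bar> + \<bar>w\<bar> * \<bar>fourier1 n a z * fourier1 n b z\<bar>)"
    unfolding fourier_diag_add rect by (intro sum_mono) (metis abs_mult abs_triangle_ineq)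
  also have "\<dots> = (\<Sum>z\<in>E. \<bar>fourier_diag n F z\<bar>) + \<bar>w\<bar> * (\<Sum>z\<in>E. \<bar>fourier1 n a z * fourier1 n b z\<bar>)"
    by (simp add: sum.distrib sum_distrib_left)
  also have "\<dots> \<le> W + \<bar>w\<bar> * 1"
    using add_rect.IH sum_abs_fourier1_mult_le[OF assms(2) add_rect.hyps(2,3)]
    by (intro add_mono mult_left_mono) simp_all
  finally show ?case by simp
next
  case (weaken W F W' G)
  then show ?case
    using fourier_diag_cong[of n F G] by simp
qed

section \<open>Amplification by majority vote\<close>

text \<open>The probability that more than half of \<open>2 * r\<close> independent trials with success
  probability \<open>p\<close> succeed.\<close>

definition majority :: "nat \<Rightarrow> real \<Rightarrow> real" where
  "majority r p = (\<Sum>j\<in>{r<..2*r}. real (2*r choose j) * p ^ j * (1 - p) ^ (2*r - j))"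

lemma power_le_balanced_power:
  fixes a b :: real
  assumes "0 \<le> b" and "b \<le> a" and "j \<le> r"
  shows "a ^ j * b ^ (2 * r - j) \<le> (a * b) ^ r"
proof -
  obtain k where k: "r = j + k"
    using le_Suc_ex assms(3) by blast
  then have "2 * r - j = j + k + k"
    by simp
  then have "a ^ j * b ^ (2 * r - j) = (a * b) ^ j * (b * b) ^ (r - j)"
    using k by (simp add: power_add power_mult_distrib mult_2_right ac_simps)
  also have "\<dots> \<le> (a * b) ^ j * (a * b) ^ (r - j)"
    using assms by (intro mult_left_mono power_mono mult_right_mono) auto
  also have "\<dots> = (a * b) ^ r"
    using assms(3) by (simp add: power_add[symmetric])
  finally show ?thesis .
qed

lemma sum_binomial_terms_le:
  fixes p :: real
  assumes "J \<subseteq> {..2*r}" and "0 \<le> p" and "p \<le> 1" and "p * (1 - p) \<le> 2/9"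
    and "\<And>j. j \<in> J \<Longrightarrow> p ^ j * (1 - p) ^ (2*r - j) \<le> (p * (1 - p)) ^ r"
  shows "(\<Sum>j\<in>J. real (2*r choose j) * p ^ j * (1 - p) ^ (2*r - j)) \<le> (8/9) ^ r"
proof -
  have "(\<Sum>j\<in>J. real (2*r choose j) * p ^ j * (1 - p) ^ (2*r - j)) \<le> (\<Sum>j\<in>J. real (2*r choose j) * (2/9) ^ r)"
  proof (rule sum_mono)
    fix j assume "j \<in> J"
    have "p ^ j * (1 - p) ^ (2*r - j) \<le> (2/9) ^ r"
      using assms(5)[OF \<open>j \<in> J\<close>] power_mono[OF assms(4), of r] assms(2,3) by simp
    then show "real (2*r choose j) * p ^ j * (1 - p) ^ (2*r - j) \<le> real (2*r choose j) * (2/9) ^ r"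
      by (simp add: mult.assoc mult_left_mono)
  qed
  also have "\<dots> \<le> (\<Sum>j\<le>2*r. real (2*r choose j)) * (2/9) ^ r"
    unfolding sum_distrib_right[symmetric] using assms(1) by (intro mult_right_mono sum_mono2) auto
  also have "\<dots> = (8/9) ^ r"
    by (simp flip: of_nat_sum add: choose_row_sum power_mult power_mult_distrib[symmetric])
  finally show ?thesis .
qed

lemma majority_le:
  assumes "0 \<le> p" and "p \<le> 1/3"
  shows "majority r p \<le> (8/9) ^ r"
  unfolding majority_def
proof (rule sum_binomial_terms_le)
  have "0 \<le> (1/3 - p) * (2/3 - p)"
    using assms by simp
  moreover have "(1/3 - p) * (2/3 - p) = 2/9 - p * (1 - p)"
    by (simp add: field_simps)
  ultimately show "p * (1 - p) \<le> 2/9"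
    by linarith
  show "p ^ j * (1 - p) ^ (2*r - j) \<le> (p * (1 - p)) ^ r" if "j \<in> {r<..2*r}" for j
  proof -
    have "(1 - p) ^ (2*r - j) * p ^ (2*r - (2*r - j)) \<le> ((1 - p) * p) ^ r"
      by (rule power_le_balanced_power) (use assms that in auto)
    then show ?thesis
      using that by (simp add: ac_simps)
  qed
qed (use assms in auto)

lemma majority_eq_1_minus_lower_tail:
  "majority r p = 1 - (\<Sum>j\<le>r. real (2*r choose j) * p ^ j * (1 - p) ^ (2*r - j))"
proof -
  have "{..2*r} = {..r} \<union> {r<..2*r}"
    by auto
  then show ?thesis
    using binomial_ring[of p "1 - p" "2*r"] by (simp add: majority_def sum.union_disjoint ivl_disj_int)
qed

lemma majority_ge:
  assumes "2/3 \<le> p" and "p \<le> 1"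
  shows "1 - (8/9) ^ r \<le> majority r p"
proof -
  have "(\<Sum>j\<le>r. real (2*r choose j) * p ^ j * (1 - p) ^ (2*r - j)) \<le> (8/9) ^ r"
  proof (rule sum_binomial_terms_le)
    have "0 \<le> (p - 1/3) * (p - 2/3)"
      using assms by simp
    moreover have "(p - 1/3) * (p - 2/3) = 2/9 - p * (1 - p)"
      by (simp add: field_simps)
    ultimately show "p * (1 - p) \<le> 2/9"
      by linarith
    show "p ^ j * (1 - p) ^ (2*r - j) \<le> (p * (1 - p)) ^ r" if "j \<in> {..r}" for j
      by (rule power_le_balanced_power) (use assms that in auto)
  qed (use assms in auto)
  then show ?thesis
    unfolding majority_eq_1_minus_lower_tail by linarith
qed

lemma abs_of_bool_minus_majority_le:
  assumes "0 \<le> p" and "p \<le> 1" and "\<bar>of_bool v - p\<bar> \<le> 1/3"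
  shows "\<bar>of_bool v - majority r p\<bar> \<le> (8/9) ^ r"
proof -
  have "0 \<le> majority r p"
    unfolding majority_def using assms(1,2) by (intro sum_nonneg) simp
  moreover have "majority r p \<le> 1"
    unfolding majority_eq_1_minus_lower_tail using assms(1,2) by (simp add: sum_nonneg)
  ultimately show ?thesis
    using assms majority_le[of p r] majority_ge[of p r] by (cases v) auto
qed

lemma nu_bounded_majority:
  assumes "nu_bounded n W P"
  shows "nu_bounded n ((2 * W + 1) ^ (2 * r)) (\<lambda>x y. majority r (P x y))"
proof -
  have complement: "nu_bounded n (1 + W) (\<lambda>x y. 1 - P x y)"
    using nu_bounded_add[OF nu_bounded_const[of n 1] nu_bounded_scale[OF assms, of "-1"]] by simp
  have "nu_bounded n (real (2*r choose j) * (W ^ j * (1 + W) ^ (2*r - j)))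
      (\<lambda>x y. real (2*r choose j) * P x y ^ j * (1 - P x y) ^ (2*r - j))" for j
    using nu_bounded_scale[OF nu_bounded_mult[OF nu_bounded_power[OF assms, of j]
          nu_bounded_power[OF complement, of "2*r - j"]], of "real (2*r choose j)"]
    by (simp add: mult.assoc)
  then have "nu_bounded n (\<Sum>j\<in>{r<..2*r}. real (2*r choose j) * (W ^ j * (1 + W) ^ (2*r - j)))
      (\<lambda>x y. majority r (P x y))"
    unfolding majority_def by (intro nu_bounded_sum) auto
  moreover have "(\<Sum>j\<in>{r<..2*r}. real (2*r choose j) * (W ^ j * (1 + W) ^ (2*r - j)))
      \<le> (\<Sum>j\<le>2*r. real (2*r choose j) * (W ^ j * (1 + W) ^ (2*r - j)))"
    using nu_bounded_nonneg[OF assms] by (intro sum_mono2) auto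
  moreover have "\<dots> = (2 * W + 1) ^ (2 * r)"
    using binomial_ring[of W "1 + W" "2*r"] by (simp add: mult.assoc)
  ultimately show ?thesis
    by (auto intro: nu_bounded_mono)
qed

section \<open>States and operators local to a set of qubits\<close>

text \<open>A function on basis states that depends only on the qubits in \<open>S\<close> represents a state of
  the register \<open>S\<close>; its squared norm as such is computed on the basis states vanishing outside \<open>S\<close>.\<close>

definition depends_on :: "nat \<Rightarrow> nat set \<Rightarrow> (bool list \<Rightarrow> complex) \<Rightarrow> bool" where
  "depends_on m S g \<longleftrightarrow> (\<forall>b\<in>cube m. \<forall>b'\<in>cube m. (\<forall>i<m. i \<in> S \<longrightarrow> b ! i = b' ! i) \<longrightarrow> g b = g b')"

definition local_basis :: "nat \<Rightarrow> nat set \<Rightarrow> bool list set" where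
  "local_basis m S = {b\<in>cube m. \<forall>i<m. i \<notin> S \<longrightarrow> \<not> b ! i}"

definition local_norm :: "nat \<Rightarrow> nat set \<Rightarrow> (bool list \<Rightarrow> complex) \<Rightarrow> real" where
  "local_norm m S g = (\<Sum>b\<in>local_basis m S. (cmod (g b))\<^sup>2)"

lemma finite_local_basis [simp]: "finite (local_basis m S)"
  unfolding local_basis_def by simp

lemma local_basis_subset_cube: "local_basis m S \<subseteq> cube m"
  unfolding local_basis_def by auto

lemma depends_onD:
  "depends_on m S g \<Longrightarrow> b \<in> cube m \<Longrightarrow> b' \<in> cube m \<Longrightarrow> (\<And>i. i < m \<Longrightarrow> i \<in> S \<Longrightarrow> b ! i = b' ! i) \<Longrightarrow>
   g b = g b'"
  unfolding depends_on_def by blast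

lemma depends_on_mult: "depends_on m S f \<Longrightarrow> depends_on m S g \<Longrightarrow> depends_on m S (\<lambda>c. f c * g c)"
  unfolding depends_on_def by metis

lemma depends_on_cnj: "depends_on m S g \<Longrightarrow> depends_on m S (\<lambda>c. cnj (g c))"
  unfolding depends_on_def by metis

lemma local_op_nonzero_agree:
  assumes "local_op m S U" and "b \<in> cube m" and "b' \<in> cube m" and "U b b' \<noteq> 0"
  shows "\<forall>i<m. i \<notin> S \<longrightarrow> b ! i = b' ! i"
  using assms unfolding local_op_def by blast

lemma nth_equal_beyond_length: "length xs = length ys \<Longrightarrow> length xs \<le> i \<Longrightarrow> xs ! i = ys ! i"
proof (induction xs arbitrary: ys i)
  case (Cons a xs)
  then obtain c ys' where "ys = c # ys'"
    by (cases ys) auto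
  moreover obtain k where "i = Suc k"
    using Cons.prems by (cases i) auto
  ultimately show ?case
    using Cons by simp
qed simp

text \<open>The definition of \<^const>\<open>local_op\<close> also constrains the indices in \<open>S\<close> beyond \<open>m\<close>, where
  all lists of length \<open>m\<close> agree.\<close>

lemma local_op_cong:
  assumes "local_op m S U" and "b \<in> cube m" and "b' \<in> cube m" and "c \<in> cube m" and "c' \<in> cube m"
    and "\<And>i. i < m \<Longrightarrow> i \<in> S \<Longrightarrow> b ! i = c ! i \<and> b' ! i = c' ! i"
    and "\<And>i. i < m \<Longrightarrow> i \<notin> S \<Longrightarrow> b ! i = b' ! i \<and> c ! i = c' ! i"
  shows "U b b' = U c c'"
proof -
  have "b ! i = c ! i \<and> b' ! i = c' ! i" if "i \<in> S" for i
    using assms(2-6) that nth_equal_beyond_length[of b c i] nth_equal_beyond_length[of b' c' i]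
    by (cases "i < m") (simp_all add: cube_def)
  then show ?thesis
    using assms(1-5,7) unfolding local_op_def by blast
qed

definition merge :: "nat \<Rightarrow> nat set \<Rightarrow> bool list \<Rightarrow> bool list \<Rightarrow> bool list" where
  "merge m S a b = map (\<lambda>i. if i \<in> S then a ! i else b ! i) [0..<m]"

lemma merge_in_cube [simp]: "merge m S a b \<in> cube m"
  by (simp add: merge_def cube_def)

lemma nth_merge [simp]: "i < m \<Longrightarrow> merge m S a b ! i = (if i \<in> S then a ! i else b ! i)"
  by (simp add: merge_def)

lemma merge_eq_iff: "c \<in> cube m \<Longrightarrow> merge m S a b = c \<longleftrightarrow> (\<forall>i<m. c ! i = (if i \<in> S then a ! i else b ! i))"
  by (auto simp: merge_def cube_def list_eq_iff_nth_eq)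

lemma apply_op_mult_local:
  assumes "local_op m S U" and "b \<in> cube m" and "depends_on m T h" and "S \<inter> T = {}"
  shows "apply_op m U (\<lambda>c. g c * h c) b = apply_op m U g b * h b"
  unfolding apply_op_def sum_distrib_right
proof (rule sum.cong[OF refl])
  fix b' assume b': "b' \<in> cube m"
  have "h b' = h b" if "U b b' \<noteq> 0"
  proof (rule depends_onD[OF assms(3) b' assms(2)])
    fix i assume "i < m" "i \<in> T"
    then show "b' ! i = b ! i"
      using assms(4) local_op_nonzero_agree[OF assms(1,2) b' that] by auto
  qed
  then show "U b b' * (g b' * h b') = U b b' * g b' * h b"
    by (cases "U b b' = 0") simp_all
qed

lemma apply_op_local:
  assumes "local_op m S U" and "b \<in> cube m"
  shows "apply_op m U g b = (\<Sum>b'\<in>{b'\<in>cube m. \<forall>i<m. i \<notin> S \<longrightarrow> b' ! i = b ! i}. U b b' * g b')"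
  unfolding apply_op_def
  by (rule sum.mono_neutral_right) (use local_op_nonzero_agree[OF assms] in auto)

lemma depends_on_apply_op:
  assumes loc: "local_op m S U" and dep: "depends_on m S g"
  shows "depends_on m S (apply_op m U g)"
  unfolding depends_on_def
proof (intro ballI impI)
  fix b1 b2 assume b1: "b1 \<in> cube m" and b2: "b2 \<in> cube m" and agree: "\<forall>i<m. i \<in> S \<longrightarrow> b1 ! i = b2 ! i"
  let ?F = "\<lambda>b. {b'\<in>cube m. \<forall>i<m. i \<notin> S \<longrightarrow> b' ! i = b ! i}"
  have "(\<Sum>b'\<in>?F b1. U b1 b' * g b') = (\<Sum>b'\<in>?F b2. U b2 b' * g b')"
  proof (rule sum.reindex_bij_witness[of _ "\<lambda>c. merge m S c b1" "\<lambda>a. merge m S a b2"])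
    fix a assume a: "a \<in> ?F b1"
    then show "merge m S (merge m S a b2) b1 = a"
      by (simp add: merge_eq_iff)
    show "merge m S a b2 \<in> ?F b2"
      by simp
    have "g (merge m S a b2) = g a"
      using a by (intro depends_onD[OF dep]) simp_all
    moreover have "U b1 a = U b2 (merge m S a b2)"
      using a agree by (intro local_op_cong[OF loc b1 _ b2]) simp_all
    ultimately show "U b2 (merge m S a b2) * g (merge m S a b2) = U b1 a * g a"
      by simp
  next
    fix c assume "c \<in> ?F b2"
    then show "merge m S (merge m S c b1) b2 = c"
      by (simp add: merge_eq_iff)
    show "merge m S c b1 \<in> ?F b1"
      by simp
  qed
  then show "apply_op m U g b1 = apply_op m U g b2"
    by (simp add: apply_op_local[OF loc b1] apply_op_local[OF loc b2])
qed

lemma sum_cmod_square_unitary: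
  fixes U :: "'a \<Rightarrow> 'a \<Rightarrow> complex"
  assumes "finite D"
    and orth: "\<And>b b'. b \<in> D \<Longrightarrow> b' \<in> D \<Longrightarrow> (\<Sum>c\<in>D. cnj (U c b) * U c b') = of_bool (b = b')"
  shows "(\<Sum>c\<in>D. (cmod (\<Sum>b\<in>D. U c b * v b))\<^sup>2) = (\<Sum>b\<in>D. (cmod (v b))\<^sup>2)"
proof -
  have orth': "(\<Sum>c\<in>D. U c b * cnj (U c b')) = of_bool (b = b')" if "b \<in> D" "b' \<in> D" for b b'
    using arg_cong[OF orth[OF that], of cnj] by (simp add: cnj_sum mult.commute)
  have expand: "(\<Sum>b\<in>D. U c b * v b) * cnj (\<Sum>b\<in>D. U c b * v b)
      = (\<Sum>b\<in>D. \<Sum>b'\<in>D. v b * cnj (v b') * (U c b * cnj (U c b')))" for c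
    by (simp only: cnj_sum complex_cnj_mult sum_product) (simp only: ac_simps)
  have "complex_of_real (\<Sum>c\<in>D. (cmod (\<Sum>b\<in>D. U c b * v b))\<^sup>2)
      = (\<Sum>c\<in>D. \<Sum>b\<in>D. \<Sum>b'\<in>D. v b * cnj (v b') * (U c b * cnj (U c b')))"
    by (simp only: of_real_sum complex_norm_square expand)
  also have "\<dots> = (\<Sum>b\<in>D. \<Sum>b'\<in>D. v b * cnj (v b') * (\<Sum>c\<in>D. U c b * cnj (U c b')))"
    by (subst sum.swap, rule sum.cong[OF refl], subst sum.swap) (simp only: sum_distrib_left)
  also have "\<dots> = (\<Sum>b\<in>D. v b * cnj (v b))"
    using \<open>finite D\<close> by (simp add: orth' of_bool_def if_distrib sum.delta cong: if_cong)
  also have "\<dots> = complex_of_real (\<Sum>b\<in>D. (cmod (v b))\<^sup>2)"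
    by (simp only: of_real_sum complex_norm_square)
  finally show ?thesis
    by (simp only: of_real_eq_iff)
qed

lemma local_norm_apply_op:
  assumes uni: "unitary_op m U" and loc: "local_op m S U"
  shows "local_norm m S (apply_op m U g) = local_norm m S g"
proof -
  have vanish: "U c b = 0"
    if "c \<in> cube m" "b \<in> cube m" "c \<in> local_basis m S \<longleftrightarrow> b \<notin> local_basis m S" for b c
  proof (rule ccontr)
    assume "U c b \<noteq> 0"
    then have "\<forall>i<m. i \<notin> S \<longrightarrow> c ! i = b ! i"
      using local_op_nonzero_agree[OF loc] that by blast
    then show False
      using that by (auto simp: local_basis_def)
  qed
  have restrict: "apply_op m U g b = (\<Sum>b'\<in>local_basis m S. U b b' * g b')" if "b \<in> local_basis m S" for b
  proof -
    have "b \<in> cube m"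
      using that local_basis_subset_cube by blast
    then show ?thesis
      unfolding apply_op_def
      by (intro sum.mono_neutral_right) (auto simp: local_basis_subset_cube vanish that)
  qed
  have "(\<Sum>c\<in>local_basis m S. cnj (U c b) * U c b') = of_bool (b = b')"
    if "b \<in> local_basis m S" "b' \<in> local_basis m S" for b b'
  proof -
    have "b \<in> cube m" "b' \<in> cube m"
      using that local_basis_subset_cube by auto
    then have "(\<Sum>c\<in>cube m. cnj (U c b) * U c b') = of_bool (b = b')"
      using uni unfolding unitary_op_def by simp
    moreover have "(\<Sum>c\<in>local_basis m S. cnj (U c b) * U c b') = (\<Sum>c\<in>cube m. cnj (U c b) * U c b')"
      using \<open>b \<in> cube m\<close> \<open>b' \<in> cube m\<close>
      by (intro sum.mono_neutral_left) (auto simp: local_basis_subset_cube vanish that)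
    ultimately show ?thesis
      by simp
  qed
  then show ?thesis
    unfolding local_norm_def using sum_cmod_square_unitary[OF finite_local_basis] restrict by simp
qed

lemma depends_on_update:
  assumes "q < m" and "depends_on m S g"
  shows "depends_on m (S - {q}) (\<lambda>b. g (b[q := v]))"
  unfolding depends_on_def
proof (intro ballI impI)
  fix b b' assume "b \<in> cube m" "b' \<in> cube m" "\<forall>i<m. i \<in> S - {q} \<longrightarrow> b ! i = b' ! i"
  then show "g (b[q := v]) = g (b'[q := v])"
    using assms(1) by (intro depends_onD[OF assms(2)]) (auto simp: cube_def nth_list_update)
qed

lemma depends_on_restrict:
  assumes "q < m" and "depends_on m T h"
  shows "depends_on m (insert q T) (\<lambda>b. if b ! q = v then h b else 0)"
  unfolding depends_on_def
proof (intro ballI impI)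
  fix b b' assume "b \<in> cube m" "b' \<in> cube m" and agree: "\<forall>i<m. i \<in> insert q T \<longrightarrow> b ! i = b' ! i"
  then have "h b = h b'"
    by (intro depends_onD[OF assms(2)]) auto
  moreover have "b ! q = b' ! q"
    using agree assms(1) by simp
  ultimately show "(if b ! q = v then h b else 0) = (if b' ! q = v then h b' else 0)"
    by simp
qed

lemma local_norm_update_le:
  assumes "q \<in> S" and "q < m"
  shows "local_norm m (S - {q}) (\<lambda>b. g (b[q := v])) \<le> local_norm m S g"
proof -
  have inj: "inj_on (\<lambda>b. b[q := v]) (local_basis m (S - {q}))"
  proof (rule inj_onI)
    fix b1 b2 assume "b1 \<in> local_basis m (S - {q})" "b2 \<in> local_basis m (S - {q})" "b1[q := v] = b2[q := v]"
    then have "(b1[q := v])[q := False] = (b2[q := v])[q := False]" and "\<not> b1 ! q" "\<not> b2 ! q"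
      using assms by (auto simp: local_basis_def)
    then show "b1 = b2"
      by (metis list_update_id list_update_overwrite)
  qed
  have sub: "(\<lambda>b. b[q := v]) ` local_basis m (S - {q}) \<subseteq> local_basis m S"
    using assms by (auto simp: local_basis_def cube_def nth_list_update split: if_splits)
  have "local_norm m (S - {q}) (\<lambda>b. g (b[q := v])) = (\<Sum>b\<in>(\<lambda>b. b[q := v]) ` local_basis m (S - {q}). (cmod (g b))\<^sup>2)"
    unfolding local_norm_def by (simp add: sum.reindex[OF inj])
  also have "\<dots> \<le> local_norm m S g"
    unfolding local_norm_def by (rule sum_mono2[OF finite_local_basis sub]) simp
  finally show ?thesis .
qed

lemma local_norm_restrict_le:
  assumes "q \<notin> T" and "q < m" and dep: "depends_on m T h"
  shows "local_norm m (insert q T) (\<lambda>b. if b ! q = v then h b else 0) \<le> local_norm m T h"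
proof -
  let ?Y = "{b\<in>local_basis m (insert q T). b ! q = v}"
  have "local_norm m (insert q T) (\<lambda>b. if b ! q = v then h b else 0) = (\<Sum>b\<in>?Y. (cmod (h b))\<^sup>2)"
  proof -
    have "(\<Sum>b\<in>local_basis m (insert q T). (cmod (if b ! q = v then h b else 0))\<^sup>2)
        = (\<Sum>b\<in>local_basis m (insert q T). if b ! q = v then (cmod (h b))\<^sup>2 else 0)"
      by (rule sum.cong) auto
    then show ?thesis
      unfolding local_norm_def by (simp add: sum.inter_filter)
  qed
  also have "\<dots> = (\<Sum>b\<in>?Y. (cmod (h (b[q := False])))\<^sup>2)"
  proof (rule sum.cong[OF refl])
    fix b assume "b \<in> ?Y"
    then have "h b = h (b[q := False])"
      using assms(1,2) by (intro depends_onD[OF dep]) (auto simp: local_basis_def cube_def nth_list_update)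
    then show "(cmod (h b))\<^sup>2 = (cmod (h (b[q := False])))\<^sup>2"
      by simp
  qed
  also have "\<dots> = (\<Sum>b\<in>(\<lambda>b. b[q := False]) ` ?Y. (cmod (h b))\<^sup>2)"
  proof (rule sum.reindex[symmetric, unfolded comp_def], rule inj_onI)
    fix b1 b2 assume "b1 \<in> ?Y" "b2 \<in> ?Y" "b1[q := False] = b2[q := False]"
    then have "(b1[q := False])[q := v] = (b2[q := False])[q := v]" and "b1 ! q = v" "b2 ! q = v"
      by auto
    then show "b1 = b2"
      by (metis list_update_id list_update_overwrite)
  qed
  also have "\<dots> \<le> local_norm m T h"
    unfolding local_norm_def using assms(1,2)
    by (intro sum_mono2[OF finite_local_basis]) (auto simp: local_basis_def cube_def nth_list_update split: if_splits)
  finally show ?thesis .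
qed

lemma mult_split_qubit:
  fixes g h :: "bool list \<Rightarrow> complex"
  shows "g b * h b = g (b[q := True]) * (if b ! q = True then h b else 0)
             + g (b[q := False]) * (if b ! q = False then h b else 0)"
proof (cases "b ! q")
  case True
  then have "b[q := True] = b"
    using list_update_id[of b q] by simp
  then show ?thesis
    using True by simp
next
  case False
  then have "b[q := False] = b"
    using list_update_id[of b q] by simp
  then show ?thesis
    using False by simp
qed

lemma sum_mult_local:
  assumes dg: "depends_on m S g" and dh: "depends_on m ({0..<m} - S) h"
  shows "(\<Sum>b\<in>cube m. g b * h b) = (\<Sum>b\<in>local_basis m S. g b) * (\<Sum>b\<in>local_basis m ({0..<m} - S). h b)"
proof -
  let ?z = "replicate m False"
  let ?\<phi> = "\<lambda>b. (merge m S b ?z, merge m ({0..<m} - S) b ?z)"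
  have "bij_betw ?\<phi> (cube m) (local_basis m S \<times> local_basis m ({0..<m} - S))"
  proof (rule bij_betwI')
    fix b1 b2 assume "b1 \<in> cube m" "b2 \<in> cube m"
    then show "(?\<phi> b1 = ?\<phi> b2) = (b1 = b2)"
      by (auto simp: merge_def cube_def list_eq_iff_nth_eq)
  next
    fix b assume "b \<in> cube m"
    show "?\<phi> b \<in> local_basis m S \<times> local_basis m ({0..<m} - S)"
      by (simp add: local_basis_def)
  next
    fix uv assume "uv \<in> local_basis m S \<times> local_basis m ({0..<m} - S)"
    then have "?\<phi> (merge m S (fst uv) (snd uv)) = uv"
      by (cases uv) (auto simp: local_basis_def merge_eq_iff)
    then show "\<exists>b\<in>cube m. uv = ?\<phi> b"
      by (metis merge_in_cube)
  qed
  moreover have "g b * h b = g (merge m S b ?z) * h (merge m ({0..<m} - S) b ?z)" if "b \<in> cube m" for b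
    using depends_onD[OF dg that, of "merge m S b ?z"] depends_onD[OF dh that, of "merge m ({0..<m} - S) b ?z"]
    by simp
  ultimately have "(\<Sum>b\<in>cube m. g b * h b)
      = (\<Sum>uv\<in>local_basis m S \<times> local_basis m ({0..<m} - S). g (fst uv) * h (snd uv))"
    by (simp add: sum.reindex_bij_betw[symmetric])
  also have "\<dots> = (\<Sum>b\<in>local_basis m S. g b) * (\<Sum>b\<in>local_basis m ({0..<m} - S). h b)"
    by (simp add: sum_product sum.cartesian_product split_def)
  finally show ?thesis .
qed

section \<open>Bipartite decompositions of the joint state\<close>

definition local_state :: "nat \<Rightarrow> nat set \<Rightarrow> (bool list \<Rightarrow> complex) \<Rightarrow> bool" where
  "local_state m S g \<longleftrightarrow> depends_on m S g \<and> local_norm m S g \<le> 1"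

type_synonym bipartite_term = "(bool list \<Rightarrow> bool list \<Rightarrow> complex) \<times> (bool list \<Rightarrow> bool list \<Rightarrow> complex)"

definition bipartite_decomp ::
  "nat \<Rightarrow> nat \<Rightarrow> nat set \<Rightarrow> bipartite_term list \<Rightarrow> (bool list \<Rightarrow> bool list \<Rightarrow> bool list \<Rightarrow> complex) \<Rightarrow> bool"
where
  "bipartite_decomp n m A ts \<Psi> \<longleftrightarrow> A \<subseteq> {0..<m} \<and>
     (\<forall>(a, b)\<in>set ts. (\<forall>x\<in>cube n. local_state m A (a x)) \<and> (\<forall>y\<in>cube n. local_state m ({0..<m} - A) (b y))) \<and>
     (\<forall>x\<in>cube n. \<forall>y\<in>cube n. \<forall>c\<in>cube m. \<Psi> x y c = (\<Sum>(a, b)\<leftarrow>ts. a x c * b y c))"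

lemma bipartite_decompI:
  assumes "A \<subseteq> {0..<m}"
    and "\<And>a b x. (a, b) \<in> set ts \<Longrightarrow> x \<in> cube n \<Longrightarrow> local_state m A (a x)"
    and "\<And>a b y. (a, b) \<in> set ts \<Longrightarrow> y \<in> cube n \<Longrightarrow> local_state m ({0..<m} - A) (b y)"
    and "\<And>x y c. x \<in> cube n \<Longrightarrow> y \<in> cube n \<Longrightarrow> c \<in> cube m \<Longrightarrow> \<Psi> x y c = (\<Sum>(a, b)\<leftarrow>ts. a x c * b y c)"
  shows "bipartite_decomp n m A ts \<Psi>"
  using assms unfolding bipartite_decomp_def by blast

lemma bipartite_decompD:
  assumes "bipartite_decomp n m A ts \<Psi>"
  shows "A \<subseteq> {0..<m}"
    and "(a, b) \<in> set ts \<Longrightarrow> x \<in> cube n \<Longrightarrow> local_state m A (a x)"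
    and "(a, b) \<in> set ts \<Longrightarrow> y \<in> cube n \<Longrightarrow> local_state m ({0..<m} - A) (b y)"
    and "x \<in> cube n \<Longrightarrow> y \<in> cube n \<Longrightarrow> c \<in> cube m \<Longrightarrow> \<Psi> x y c = (\<Sum>(a, b)\<leftarrow>ts. a x c * b y c)"
  using assms unfolding bipartite_decomp_def by blast+

lemma bipartite_decomp_swap:
  assumes "bipartite_decomp n m A ts \<Psi>"
  shows "bipartite_decomp n m ({0..<m} - A) (map prod.swap ts) (\<lambda>x y. \<Psi> y x)"
proof (rule bipartite_decompI)
  have "{0..<m} - ({0..<m} - A) = A"
    using bipartite_decompD(1)[OF assms] by blast
  then show "local_state m ({0..<m} - ({0..<m} - A)) (b y)" if "(a, b) \<in> set (map prod.swap ts)" "y \<in> cube n"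
    for a b y
    using bipartite_decompD(2)[OF assms] that by auto
  show "\<Psi> y x c = (\<Sum>(a, b)\<leftarrow>map prod.swap ts. a x c * b y c)" if "x \<in> cube n" "y \<in> cube n" "c \<in> cube m"
    for x y c
    using bipartite_decompD(4)[OF assms that(2,1,3)] by (simp add: o_def split_def mult.commute)
qed (use bipartite_decompD(3)[OF assms] in auto)

lemma apply_op_cong: "(\<And>c. c \<in> cube m \<Longrightarrow> g c = g' c) \<Longrightarrow> apply_op m U g = apply_op m U g'"
  unfolding apply_op_def by (intro ext sum.cong) simp_all

lemma apply_op_sum_list: "apply_op m U (\<lambda>c. \<Sum>t\<leftarrow>ts. F t c) c = (\<Sum>t\<leftarrow>ts. apply_op m U (F t) c)"
  unfolding apply_op_def by (induction ts) (simp_all add: sum.distrib algebra_simps)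

lemma bipartite_decomp_apply_op:
  assumes decomp: "bipartite_decomp n m A ts \<Psi>" and "unitary_op m U" and loc: "local_op m A U"
  shows "bipartite_decomp n m A (map (\<lambda>(a, b). (\<lambda>x. apply_op m U (a x), b)) ts) (\<lambda>x y. apply_op m U (\<Psi> x y))"
proof (rule bipartite_decompI)
  show "A \<subseteq> {0..<m}"
    using bipartite_decompD(1)[OF decomp] .
  show "local_state m A (a' x)" if "(a', b') \<in> set (map (\<lambda>(a, b). (\<lambda>x. apply_op m U (a x), b)) ts)" "x \<in> cube n"
    for a' b' x
    using that bipartite_decompD(2)[OF decomp] depends_on_apply_op[OF loc] local_norm_apply_op[OF assms(2,3)]
    by (auto simp: local_state_def)
  show "local_state m ({0..<m} - A) (b' y)"
    if "(a', b') \<in> set (map (\<lambda>(a, b). (\<lambda>x. apply_op m U (a x), b)) ts)" "y \<in> cube n" for a' b' y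
    using that bipartite_decompD(3)[OF decomp] by auto
next
  fix x y c assume x: "x \<in> cube n" and y: "y \<in> cube n" and c: "c \<in> cube m"
  have "apply_op m U (\<Psi> x y) c = apply_op m U (\<lambda>c'. \<Sum>(a, b)\<leftarrow>ts. a x c' * b y c') c"
    using bipartite_decompD(4)[OF decomp x y] by (simp cong: apply_op_cong)
  also have "\<dots> = (\<Sum>(a, b)\<leftarrow>ts. apply_op m U (a x) c * b y c)"
    unfolding split_def apply_op_sum_list
  proof (intro arg_cong[where f = sum_list] map_cong refl)
    fix t assume "t \<in> set ts"
    then have "depends_on m ({0..<m} - A) (snd t y)"
      using bipartite_decompD(3)[OF decomp, of "fst t" "snd t" y] y by (simp add: local_state_def)
    then show "apply_op m U (\<lambda>c'. fst t x c' * snd t y c') c = apply_op m U (fst t x) c * snd t y c"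
      by (rule apply_op_mult_local[OF loc c]) blast
  qed
  finally show "apply_op m U (\<Psi> x y) c
      = (\<Sum>(a, b)\<leftarrow>map (\<lambda>(a, b). (\<lambda>x. apply_op m U (a x), b)) ts. a x c * b y c)"
    by (simp add: o_def split_def)
qed

definition split_term :: "nat \<Rightarrow> bool \<Rightarrow> bipartite_term \<Rightarrow> bipartite_term" where
  "split_term q v = (\<lambda>(a, b). (\<lambda>x c. a x (c[q := v]), \<lambda>y c. if c ! q = v then b y c else 0))"

lemma bipartite_decomp_send:
  assumes decomp: "bipartite_decomp n m A ts \<Psi>" and "q \<in> A"
  shows "bipartite_decomp n m (A - {q}) (map (split_term q True) ts @ map (split_term q False) ts) \<Psi>"
proof (rule bipartite_decompI)
  have A: "A \<subseteq> {0..<m}"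
    using bipartite_decompD(1)[OF decomp] .
  then have "q < m"
    using \<open>q \<in> A\<close> by auto
  show "A - {q} \<subseteq> {0..<m}"
    using A by auto
  have Bob: "{0..<m} - (A - {q}) = insert q ({0..<m} - A)"
    using \<open>q < m\<close> \<open>q \<in> A\<close> by auto
  fix a' b'
  assume "(a', b') \<in> set (map (split_term q True) ts @ map (split_term q False) ts)"
  then obtain a b v where ab: "(a, b) \<in> set ts" and split: "a' = (\<lambda>x c. a x (c[q := v]))"
      "b' = (\<lambda>y c. if c ! q = v then b y c else 0)"
    by (auto simp: split_term_def)
  show "local_state m (A - {q}) (a' x)" if "x \<in> cube n" for x
    using bipartite_decompD(2)[OF decomp ab that] depends_on_update[OF \<open>q < m\<close>]
      local_norm_update_le[OF \<open>q \<in> A\<close> \<open>q < m\<close>, of "a x" v]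
    by (auto simp: local_state_def split)
  show "local_state m ({0..<m} - (A - {q})) (b' y)" if "y \<in> cube n" for y
    using bipartite_decompD(3)[OF decomp ab that] depends_on_restrict[OF \<open>q < m\<close>]
      local_norm_restrict_le[of q "{0..<m} - A" m "b y" v] \<open>q \<in> A\<close> \<open>q < m\<close>
    by (auto simp: local_state_def split Bob)
next
  fix x y c assume "x \<in> cube n" "y \<in> cube n" "c \<in> cube m"
  then have "\<Psi> x y c = (\<Sum>(a, b)\<leftarrow>ts. a x c * b y c)"
    by (rule bipartite_decompD(4)[OF decomp])
  also have "\<dots> = (\<Sum>t\<leftarrow>ts. (\<lambda>(a, b). a x c * b y c) (split_term q True t)
                             + (\<lambda>(a, b). a x c * b y c) (split_term q False t))"
  proof (intro arg_cong[where f = sum_list] map_cong refl)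
    fix t :: bipartite_term
    show "(\<lambda>(a, b). a x c * b y c) t = (\<lambda>(a, b). a x c * b y c) (split_term q True t)
                                     + (\<lambda>(a, b). a x c * b y c) (split_term q False t)"
      using mult_split_qubit[of "fst t x" c "snd t y" q] by (simp add: split_term_def split_def)
  qed
  finally show "\<Psi> x y c = (\<Sum>(a, b)\<leftarrow>map (split_term q True) ts @ map (split_term q False) ts. a x c * b y c)"
    by (simp add: sum_list_addf o_def)
qed

lemma bipartite_decomp_alice_round:
  assumes "bipartite_decomp n m A ts \<Psi>" and "unitary_op m U" and "local_op m A U" and "q \<in> A"
  shows "\<exists>ts'. length ts' = 2 * length ts \<and> bipartite_decomp n m (A - {q}) ts' (\<lambda>x y. apply_op m U (\<Psi> x y))"
proof -
  let ?ts = "map (\<lambda>(a, b). (\<lambda>x. apply_op m U (a x), b)) ts"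
  show ?thesis
    using bipartite_decomp_send[OF bipartite_decomp_apply_op[OF assms(1-3)] assms(4)]
    by (intro exI[of _ "map (split_term q True) ?ts @ map (split_term q False) ?ts"]) simp
qed

text \<open>Bob's rounds are Alice's rounds with the roles of the two players exchanged.\<close>

lemma bipartite_decomp_bob_round:
  assumes decomp: "bipartite_decomp n m A ts \<Psi>" and "unitary_op m U" and "local_op m ({0..<m} - A) U"
    and q: "q \<in> {0..<m} - A"
  shows "\<exists>ts'. length ts' = 2 * length ts \<and> bipartite_decomp n m (insert q A) ts' (\<lambda>x y. apply_op m U (\<Psi> x y))"
proof -
  obtain ts' where "length ts' = 2 * length ts"
    and "bipartite_decomp n m ({0..<m} - A - {q}) ts' (\<lambda>x y. apply_op m U (\<Psi> y x))"
    using bipartite_decomp_alice_round[OF bipartite_decomp_swap[OF decomp] assms(2-4)] by auto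
  moreover have "{0..<m} - ({0..<m} - A - {q}) = insert q A"
    using bipartite_decompD(1)[OF decomp] q by auto
  ultimately show ?thesis
    using bipartite_decomp_swap[of n m "{0..<m} - A - {q}" ts'] by (intro exI[of _ "map prod.swap ts'"]) simp
qed

lemma bipartite_decomp_run_rounds:
  "valid_rounds m A rs \<Longrightarrow> bipartite_decomp n m A ts \<Psi> \<Longrightarrow>
   \<exists>A' ts'. length ts' = 2 ^ length rs * length ts \<and> bipartite_decomp n m A' ts' (\<lambda>x y. run_rounds m rs (\<Psi> x y))"
proof (induction rs arbitrary: A ts \<Psi>)
  case Nil
  then show ?case by auto
next
  case (Cons r rs)
  obtain p U q where r: "r = (p, U, q)"
    by (cases r)
  obtain A' ts' where "valid_rounds m A' rs" and "length ts' = 2 * length ts"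
    and "bipartite_decomp n m A' ts' (\<lambda>x y. apply_op m U (\<Psi> x y))"
  proof (cases p)
    case True
    then show ?thesis
      using Cons.prems bipartite_decomp_alice_round[OF Cons.prems(2)] that r by (auto simp: Let_def)
  next
    case False
    then show ?thesis
      using Cons.prems bipartite_decomp_bob_round[OF Cons.prems(2)] that r by (auto simp: Let_def)
  qed
  then show ?case
    using Cons.IH r by (fastforce simp: algebra_simps)
qed

lemma local_norm_indicator_le:
  assumes "\<And>b. b \<in> local_basis m S \<Longrightarrow> P b \<Longrightarrow> b = bs"
  shows "local_norm m S (\<lambda>b. of_bool (P b)) \<le> 1"
proof -
  have "local_norm m S (\<lambda>b. of_bool (P b)) = (\<Sum>b\<in>local_basis m S. if P b then 1 else 0)"
    unfolding local_norm_def by (rule sum.cong) simp_all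
  also have "\<dots> = real (card {b\<in>local_basis m S. P b})"
    by (simp add: sum.inter_filter[symmetric])
  also have "\<dots> \<le> real (card {bs})"
    using assms by (intro of_nat_mono card_mono) auto
  finally show ?thesis
    by simp
qed

lemma init_state_eq_mult:
  assumes x: "x \<in> cube n" and y: "y \<in> cube n" and c: "c \<in> cube m"
    and "2 * n \<le> m" and "{0..<n} \<subseteq> A" and "A \<inter> {n..<2*n} = {}"
  shows "init_state m x y c = of_bool (\<forall>i<m. i \<in> A \<longrightarrow> c ! i = (i < n \<and> x ! i))
      * of_bool (\<forall>i<m. i \<notin> A \<longrightarrow> c ! i = (n \<le> i \<and> i < 2 * n \<and> y ! (i - n)))"
proof -
  let ?s = "x @ y @ replicate (m - length x - length y) False"
  have "?s ! i = (if i < n then x ! i else if i < 2 * n then y ! (i - n) else False)" if "i < m" for i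
    using x y that by (auto simp: cube_def nth_append)
  also have "\<dots> i = (if i \<in> A then i < n \<and> x ! i else n \<le> i \<and> i < 2 * n \<and> y ! (i - n))" for i
    using assms(5,6) by auto
  finally have s: "?s ! i = (if i \<in> A then i < n \<and> x ! i else n \<le> i \<and> i < 2 * n \<and> y ! (i - n))"
    if "i < m" for i
    using that by blast
  have "c = ?s \<longleftrightarrow> (\<forall>i<m. c ! i = ?s ! i)"
    using x y c assms(4) by (auto simp: cube_def list_eq_iff_nth_eq)
  also have "\<dots> \<longleftrightarrow> (\<forall>i<m. i \<in> A \<longrightarrow> c ! i = (i < n \<and> x ! i)) \<and>
      (\<forall>i<m. i \<notin> A \<longrightarrow> c ! i = (n \<le> i \<and> i < 2 * n \<and> y ! (i - n)))"
    using s by auto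
  finally show ?thesis
    by (simp add: init_state_def)
qed

lemma bipartite_decomp_init_state:
  assumes "2 * n \<le> m" and A: "{0..<n} \<subseteq> A" "A \<subseteq> {0..<m}" "A \<inter> {n..<2*n} = {}"
  shows "\<exists>ts. length ts = 1 \<and> bipartite_decomp n m A ts (init_state m)"
proof -
  define a :: "bool list \<Rightarrow> bool list \<Rightarrow> complex"
    where "a x c = of_bool (\<forall>i<m. i \<in> A \<longrightarrow> c ! i = (i < n \<and> x ! i))" for x c
  define b :: "bool list \<Rightarrow> bool list \<Rightarrow> complex"
    where "b y c = of_bool (\<forall>i<m. i \<notin> A \<longrightarrow> c ! i = (n \<le> i \<and> i < 2 * n \<and> y ! (i - n)))" for y c
  have "bipartite_decomp n m A [(a, b)] (init_state m)"
  proof (rule bipartite_decompI)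
    fix x :: "bool list"
    have "local_norm m A (a x) \<le> 1"
      unfolding a_def
      by (rule local_norm_indicator_le[where bs = "map (\<lambda>i. i \<in> A \<and> i < n \<and> x ! i) [0..<m]"])
        (auto simp: local_basis_def cube_def list_eq_iff_nth_eq)
    then show "local_state m A (a' x)" if "(a', b') \<in> set [(a, b)]" for a' b'
      using that by (auto simp: local_state_def depends_on_def a_def)
  next
    fix y :: "bool list"
    have "local_norm m ({0..<m} - A) (b y) \<le> 1"
      unfolding b_def
      by (rule local_norm_indicator_le[where bs = "map (\<lambda>i. i \<notin> A \<and> n \<le> i \<and> i < 2 * n \<and> y ! (i - n)) [0..<m]"])
        (auto simp: local_basis_def cube_def list_eq_iff_nth_eq)
    then show "local_state m ({0..<m} - A) (b' y)" if "(a', b') \<in> set [(a, b)]" for a' b'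
      using that by (auto simp: local_state_def depends_on_def b_def)
  qed (use assms in \<open>simp_all add: init_state_eq_mult a_def b_def\<close>)
  then show ?thesis
    by (intro exI[of _ "[(a, b)]"]) simp
qed

lemma bipartite_decomp_mult_local:
  assumes decomp: "bipartite_decomp n m A ts \<Psi>" and dep: "depends_on m A \<chi>" and bound: "\<And>c. cmod (\<chi> c) \<le> 1"
  shows "bipartite_decomp n m A (map (\<lambda>(a, b). (\<lambda>x c. \<chi> c * a x c, b)) ts) (\<lambda>x y c. \<chi> c * \<Psi> x y c)"
proof (rule bipartite_decompI)
  show "local_state m A (a' x)"
    if mem: "(a', b') \<in> set (map (\<lambda>(a, b). (\<lambda>x c. \<chi> c * a x c, b)) ts)" and x: "x \<in> cube n" for a' b' x
  proof -
    obtain a where a: "(a, b') \<in> set ts" "a' = (\<lambda>x c. \<chi> c * a x c)"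
      using mem by auto
    then have "local_state m A (a x)"
      using bipartite_decompD(2)[OF decomp] x by blast
    moreover have "(cmod (\<chi> c * a x c))\<^sup>2 \<le> (cmod (a x c))\<^sup>2" for c
      using bound[of c] by (simp add: norm_mult power_mult_distrib mult_left_le_one_le power_le_one)
    then have "local_norm m A (a' x) \<le> local_norm m A (a x)"
      unfolding local_norm_def a(2) by (intro sum_mono)
    ultimately show ?thesis
      using depends_on_mult[OF dep] unfolding local_state_def a(2) by auto
  qed
  show "\<chi> c * \<Psi> x y c = (\<Sum>(a, b)\<leftarrow>map (\<lambda>(a, b). (\<lambda>x c. \<chi> c * a x c, b)) ts. a x c * b y c)"
    if "x \<in> cube n" "y \<in> cube n" "c \<in> cube m" for x y c
    using bipartite_decompD(4)[OF decomp that]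
    by (simp add: o_def split_def sum_list_const_mult mult.assoc)
qed (use bipartite_decompD[OF decomp] in auto)

lemma cmod_sum_mult_cnj_le:
  fixes a a' :: "'a \<Rightarrow> complex"
  shows "cmod (\<Sum>c\<in>D. a c * cnj (a' c)) \<le> ((\<Sum>c\<in>D. (cmod (a c))\<^sup>2) + (\<Sum>c\<in>D. (cmod (a' c))\<^sup>2)) / 2"
proof -
  have "cmod (\<Sum>c\<in>D. a c * cnj (a' c)) \<le> (\<Sum>c\<in>D. cmod (a c) * cmod (a' c))"
    using norm_sum[of "\<lambda>c. a c * cnj (a' c)" D] by (simp add: norm_mult)
  also have "\<dots> \<le> (\<Sum>c\<in>D. ((cmod (a c))\<^sup>2 + (cmod (a' c))\<^sup>2) / 2)"
  proof (rule sum_mono)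
    fix c
    show "cmod (a c) * cmod (a' c) \<le> ((cmod (a c))\<^sup>2 + (cmod (a' c))\<^sup>2) / 2"
      using sum_squares_bound[of "cmod (a c)" "cmod (a' c)"] by simp
  qed
  also have "\<dots> = ((\<Sum>c\<in>D. (cmod (a c))\<^sup>2) + (\<Sum>c\<in>D. (cmod (a' c))\<^sup>2)) / 2"
    by (simp only: sum_divide_distrib[symmetric] sum.distrib)
  finally show ?thesis .
qed

lemma sum_cmod_square_sum:
  fixes P :: "nat \<Rightarrow> 'a \<Rightarrow> complex"
  shows "(\<Sum>c\<in>C. (cmod (\<Sum>i<k. P i c))\<^sup>2) = (\<Sum>i<k. \<Sum>j<k. Re (\<Sum>c\<in>C. P i c * cnj (P j c)))"
proof -
  have "complex_of_real (\<Sum>c\<in>C. (cmod (\<Sum>i<k. P i c))\<^sup>2) = (\<Sum>c\<in>C. (\<Sum>i<k. P i c) * cnj (\<Sum>j<k. P j c))"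
    by (simp only: of_real_sum complex_norm_square)
  also have "\<dots> = (\<Sum>c\<in>C. \<Sum>i<k. \<Sum>j<k. P i c * cnj (P j c))"
    by (simp only: cnj_sum sum_product)
  also have "\<dots> = (\<Sum>i<k. \<Sum>j<k. \<Sum>c\<in>C. P i c * cnj (P j c))"
    by (subst sum.swap, rule sum.cong[OF refl], rule sum.swap)
  finally have "Re (complex_of_real (\<Sum>c\<in>C. (cmod (\<Sum>i<k. P i c))\<^sup>2))
      = Re (\<Sum>i<k. \<Sum>j<k. \<Sum>c\<in>C. P i c * cnj (P j c))"
    by (rule arg_cong)
  then show ?thesis
    by (simp only: Re_complex_of_real Re_sum)
qed

lemma nu_bounded_sum_cmod_square:
  assumes decomp: "bipartite_decomp n m A ts \<Psi>"
  shows "nu_bounded n (2 * length ts ^ 2) (\<lambda>x y. \<Sum>c\<in>cube m. (cmod (\<Psi> x y c))\<^sup>2)"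
proof -
  define k where "k = length ts"
  define a where "a i = fst (ts ! i)" for i
  define b where "b i = snd (ts ! i)" for i
  define G where "G i j x = (\<Sum>c\<in>local_basis m A. a i x c * cnj (a j x c))" for i j x
  define H where "H i j y = (\<Sum>c\<in>local_basis m ({0..<m} - A). b i y c * cnj (b j y c))" for i j y
  have local: "local_state m A (a i x)" "local_state m ({0..<m} - A) (b i y)"
    if "i < k" "x \<in> cube n" "y \<in> cube n" for i x y
    using bipartite_decompD(2,3)[OF decomp, of "a i" "b i"] that nth_mem[of i ts]
    by (auto simp: a_def b_def k_def)
  have expand: "(\<Sum>c\<in>cube m. (cmod (\<Psi> x y c))\<^sup>2) = (\<Sum>i<k. \<Sum>j<k. Re (G i j x * H i j y))"
    if x: "x \<in> cube n" and y: "y \<in> cube n" for x y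
  proof -
    have "(\<Sum>c\<in>cube m. (cmod (\<Psi> x y c))\<^sup>2) = (\<Sum>c\<in>cube m. (cmod (\<Sum>i<k. a i x c * b i y c))\<^sup>2)"
      using bipartite_decompD(4)[OF decomp x y]
      by (intro sum.cong) (simp_all add: sum_list_sum_nth k_def a_def b_def split_def atLeast0LessThan)
    also have "\<dots> = (\<Sum>i<k. \<Sum>j<k. Re (\<Sum>c\<in>cube m. a i x c * b i y c * cnj (a j x c * b j y c)))"
      by (rule sum_cmod_square_sum)
    also have "\<dots> = (\<Sum>i<k. \<Sum>j<k. Re (G i j x * H i j y))"
    proof (intro sum.cong refl arg_cong[where f = Re])
      fix i j assume "i \<in> {..<k}" "j \<in> {..<k}"
      then have "depends_on m A (\<lambda>c. a i x c * cnj (a j x c))"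
        and "depends_on m ({0..<m} - A) (\<lambda>c. b i y c * cnj (b j y c))"
        using local[of i x y] local[of j x y] x y
        by (auto simp: local_state_def intro!: depends_on_mult depends_on_cnj)
      from sum_mult_local[OF this]
      show "(\<Sum>c\<in>cube m. a i x c * b i y c * cnj (a j x c * b j y c)) = G i j x * H i j y"
        by (simp add: G_def H_def ac_simps)
    qed
    finally show ?thesis .
  qed
  have "nu_bounded n 2 (\<lambda>x y. Re (G i j x * H i j y))" if "i < k" "j < k" for i j
  proof (rule nu_bounded_Re_mult)
    show "cmod (G i j x) \<le> 1" if "x \<in> cube n" for x
      using cmod_sum_mult_cnj_le[of "a i x" "a j x" "local_basis m A"] local[of i x x] local[of j x x] \<open>i < k\<close> \<open>j < k\<close> that
      by (simp add: G_def local_state_def local_norm_def)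
    show "cmod (H i j y) \<le> 1" if "y \<in> cube n" for y
      using cmod_sum_mult_cnj_le[of "b i y" "b j y" "local_basis m ({0..<m} - A)"] local[of i y y] local[of j y y] \<open>i < k\<close> \<open>j < k\<close> that
      by (simp add: H_def local_state_def local_norm_def)
  qed
  then have "nu_bounded n (\<Sum>i<k. \<Sum>j<k. 2) (\<lambda>x y. \<Sum>i<k. \<Sum>j<k. Re (G i j x * H i j y))"
    by (intro nu_bounded_sum) simp_all
  then have "nu_bounded n (2 * length ts ^ 2) (\<lambda>x y. \<Sum>i<k. \<Sum>j<k. Re (G i j x * H i j y))"
    by (rule nu_bounded_mono) (simp add: k_def power2_eq_square)
  then show ?thesis
    by (rule nu_bounded_cong) (simp only: expand)
qed

lemma meas_prob_eq_sum_cmod_square: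
  "meas_prob m out \<psi> True = (\<Sum>c\<in>cube m. (cmod (of_bool (c ! out) * \<psi> c))\<^sup>2)"
proof -
  have "(\<Sum>c\<in>cube m. (cmod (of_bool (c ! out) * \<psi> c))\<^sup>2) = (\<Sum>c\<in>cube m. if c ! out then (cmod (\<psi> c))\<^sup>2 else 0)"
    by (rule sum.cong) simp_all
  then show ?thesis
    unfolding meas_prob_def by (simp add: sum.inter_filter)
qed

lemma nu_bounded_meas_prob:
  assumes decomp: "bipartite_decomp n m A ts \<Psi>" and "out < m"
  shows "nu_bounded n (2 * length ts ^ 2) (\<lambda>x y. meas_prob m out (\<Psi> x y) True)"
proof -
  let ?\<chi> = "\<lambda>c. of_bool (c ! out) :: complex"
  have \<chi>: "depends_on m S ?\<chi>" if "out \<in> S" for S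
    using that \<open>out < m\<close> unfolding depends_on_def by auto
  have bound: "cmod (?\<chi> c) \<le> 1" for c
    by (cases "c ! out") simp_all
  obtain ts' where "length ts' = length ts" and "bipartite_decomp n m A ts' (\<lambda>x y c. ?\<chi> c * \<Psi> x y c)"
  proof (cases "out \<in> A")
    case True
    from bipartite_decomp_mult_local[OF decomp \<chi>[OF True] bound] show ?thesis
      by (rule that[rotated]) simp
  next
    case False
    then have "out \<in> {0..<m} - A"
      using \<open>out < m\<close> by simp
    from bipartite_decomp_swap[OF bipartite_decomp_mult_local[OF bipartite_decomp_swap[OF decomp] \<chi>[OF this] bound]]
    have "bipartite_decomp n m ({0..<m} - ({0..<m} - A))
        (map prod.swap (map (\<lambda>(a, b). (\<lambda>x c. ?\<chi> c * a x c, b)) (map prod.swap ts)))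
        (\<lambda>x y c. ?\<chi> c * \<Psi> x y c)" .
    moreover have "{0..<m} - ({0..<m} - A) = A"
      using bipartite_decompD(1)[OF decomp] by auto
    ultimately have "bipartite_decomp n m A
        (map prod.swap (map (\<lambda>(a, b). (\<lambda>x c. ?\<chi> c * a x c, b)) (map prod.swap ts)))
        (\<lambda>x y c. ?\<chi> c * \<Psi> x y c)"
      by simp
    then show ?thesis
      by (rule that[rotated]) simp
  qed
  then show ?thesis
    using nu_bounded_sum_cmod_square[of n m A ts'] by (simp add: meas_prob_eq_sum_cmod_square)
qed

section \<open>Protocols\<close>

lemma sum_cmod_square_run_rounds:
  "valid_rounds m A rs \<Longrightarrow> (\<Sum>c\<in>cube m. (cmod (run_rounds m rs \<psi> c))\<^sup>2) = (\<Sum>c\<in>cube m. (cmod (\<psi> c))\<^sup>2)"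
proof (induction rs arbitrary: A \<psi>)
  case (Cons r rs)
  obtain p U q where r: "r = (p, U, q)"
    by (cases r)
  then have "unitary_op m U" and "valid_rounds m (if p then A - {q} else A \<union> {q}) rs"
    using Cons.prems by (auto simp: Let_def)
  then show ?case
    using Cons.IH r sum_cmod_square_unitary[OF finite_cube, where U = U and v = \<psi>]
    by (simp add: apply_op_def unitary_op_def)
qed simp

lemma sum_cmod_square_init_state:
  assumes "x \<in> cube n" and "y \<in> cube n" and "2 * n \<le> m"
  shows "(\<Sum>c\<in>cube m. (cmod (init_state m x y c))\<^sup>2) = 1"
proof -
  let ?s = "x @ y @ replicate (m - length x - length y) False"
  have "?s \<in> cube m"
    using assms by (simp add: cube_def)
  moreover have "(\<Sum>c\<in>cube m. (cmod (init_state m x y c))\<^sup>2) = (\<Sum>c\<in>cube m. if c = ?s then 1 else 0)"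
    by (rule sum.cong) (simp_all add: init_state_def)
  ultimately show ?thesis
    by simp
qed

lemma meas_prob_add: "meas_prob m out \<psi> True + meas_prob m out \<psi> False = (\<Sum>c\<in>cube m. (cmod (\<psi> c))\<^sup>2)"
  unfolding meas_prob_def by (subst sum.union_disjoint[symmetric]) (auto intro: sum.cong)

lemma accept_prob_approximates:
  assumes comp: "computes n f m A0 rs out" and x: "x \<in> cube n" and y: "y \<in> cube n"
  defines "P \<equiv> meas_prob m out (run_rounds m rs (init_state m x y))"
  shows "0 \<le> P True" and "P True \<le> 1" and "\<bar>of_bool (f x y) - P True\<bar> \<le> 1/3"
proof -
  have total: "P True + P False = 1"
    using comp x y sum_cmod_square_run_rounds[of m A0 rs] sum_cmod_square_init_state[OF x y]
    by (simp add: P_def meas_prob_add computes_def)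
  have nonneg: "0 \<le> P v" for v
    unfolding P_def meas_prob_def by (simp add: sum_nonneg)
  have correct: "P (f x y) \<ge> 2/3"
    using comp x y by (simp add: P_def computes_def)
  show "0 \<le> P True" "P True \<le> 1"
    using total nonneg[of True] nonneg[of False] by linarith+
  show "\<bar>of_bool (f x y) - P True\<bar> \<le> 1/3"
    using total nonneg[of True] nonneg[of False] correct by (cases "f x y") simp_all
qed

lemma nu_bounded_accept_prob:
  assumes "computes n f m A0 rs out"
  shows "nu_bounded n (2 * 4 ^ length rs) (\<lambda>x y. meas_prob m out (run_rounds m rs (init_state m x y)) True)"
proof -
  have "2 * n \<le> m" "{0..<n} \<subseteq> A0" "A0 \<subseteq> {0..<m}" "A0 \<inter> {n..<2*n} = {}"
    and "valid_rounds m A0 rs" and "out < m"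
    using assms by (simp_all add: computes_def)
  then obtain ts where "length ts = 1" and "bipartite_decomp n m A0 ts (init_state m)"
    using bipartite_decomp_init_state by blast
  then obtain A' ts' where len: "length ts' = 2 ^ length rs"
    and decomp: "bipartite_decomp n m A' ts' (\<lambda>x y. run_rounds m rs (init_state m x y))"
    using bipartite_decomp_run_rounds[OF \<open>valid_rounds m A0 rs\<close>, of n ts "init_state m"] by auto
  have "(2::real) * length ts' ^ 2 = 2 * 4 ^ length rs"
    using len by (simp add: power2_eq_square power_mult_distrib[symmetric])
  then show ?thesis
    using nu_bounded_meas_prob[OF decomp \<open>out < m\<close>] by simp
qed

lemma kappa1_eq_fourier_diag: "kappa1 n f E = (\<Sum>z\<in>E. \<bar>fourier_diag n (\<lambda>x y. of_bool (f x y)) z\<bar>)"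
  unfolding kappa1_def by (simp add: fourier_eq_fourier_diag)

lemma kappa1_le_sqrt_kappa0: "E \<subseteq> cube n \<Longrightarrow> kappa1 n f E \<le> sqrt (kappa0 E)"
  using sum_abs_fourier_diag_le[of E n "\<lambda>x y. of_bool (f x y)" 1]
  unfolding kappa1_eq_fourier_diag kappa0_def by simp

lemma kappa1_nonneg: "0 \<le> kappa1 n f E"
  unfolding kappa1_def by (simp add: sum_nonneg)

text \<open>Amplifying the protocol by a majority vote over \<open>2 * r\<close> runs gives a matrix of small
  \<open>\<nu>\<close>-norm that is \<open>(8/9) ^ r\<close>-close to \<open>f\<close>; the first term bounds its contribution to
  \<open>kappa1\<close>, the second that of the error.\<close>

lemma kappa1_le_protocol:
  assumes comp: "computes n f m A0 rs out" and E: "E \<subseteq> cube n"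
  shows "kappa1 n f E \<le> (4 * 4 ^ length rs + 1) ^ (2 * r) + (8/9) ^ r * sqrt (kappa0 E)"
proof -
  define P where "P x y = meas_prob m out (run_rounds m rs (init_state m x y)) True" for x y
  define Q where "Q x y = majority r (P x y)" for x y
  have "nu_bounded n ((2 * (2 * 4 ^ length rs) + 1) ^ (2 * r)) Q"
    unfolding Q_def P_def by (rule nu_bounded_majority[OF nu_bounded_accept_prob[OF comp]])
  then have "(\<Sum>z\<in>E. \<bar>fourier_diag n Q z\<bar>) \<le> (4 * 4 ^ length rs + 1) ^ (2 * r)"
    using nu_bounded_sum_abs_fourier_diag[OF _ E] by simp
  moreover have "\<bar>of_bool (f x y) - Q x y\<bar> \<le> (8/9) ^ r" if "x \<in> cube n" "y \<in> cube n" for x y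
    using accept_prob_approximates[OF comp that] unfolding Q_def P_def by (rule abs_of_bool_minus_majority_le)
  then have "(\<Sum>z\<in>E. \<bar>fourier_diag n (\<lambda>x y. of_bool (f x y) - Q x y) z\<bar>) \<le> (8/9) ^ r * sqrt (kappa0 E)"
    unfolding kappa0_def by (rule sum_abs_fourier_diag_le[OF E])
  moreover have split: "fourier_diag n (\<lambda>x y. of_bool (f x y)) z
      = fourier_diag n Q z + fourier_diag n (\<lambda>x y. of_bool (f x y) - Q x y) z" for z
    by (simp add: fourier_diag_add[symmetric])
  have "kappa1 n f E \<le> (\<Sum>z\<in>E. \<bar>fourier_diag n Q z\<bar>) + (\<Sum>z\<in>E. \<bar>fourier_diag n (\<lambda>x y. of_bool (f x y) - Q x y) z\<bar>)"
    unfolding kappa1_eq_fourier_diag split sum.distrib[symmetric] by (intro sum_mono abs_triangle_ineq)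
  ultimately show ?thesis
    by linarith
qed

lemma init_state_eq_basis_state: "init_state m x y = (\<lambda>c. of_bool (c = x @ y @ replicate (m - length x - length y) False))"
  by (simp add: init_state_def fun_eq_iff)

lemma meas_prob_basis_state: "b \<in> cube m \<Longrightarrow> meas_prob m out (\<lambda>c. of_bool (c = b)) v = of_bool (b ! out = v)"
proof -
  assume "b \<in> cube m"
  have "meas_prob m out (\<lambda>c. of_bool (c = b)) v = (\<Sum>c\<in>{c\<in>cube m. c ! out = v}. if c = b then 1 else 0)"
    unfolding meas_prob_def by (rule sum.cong) simp_all
  then show ?thesis
    using \<open>b \<in> cube m\<close> by simp
qed

lemma apply_op_basis_state: "b \<in> cube m \<Longrightarrow> apply_op m U (\<lambda>c. of_bool (c = b)) = (\<lambda>c. U c b)"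
  unfolding apply_op_def by (simp add: of_bool_def if_distrib[of "\<lambda>t. _ * t"] sum.delta' cong: if_cong)

lemma kappa1_le_1_if_no_rounds:
  assumes comp: "computes n f m A0 [] out" and E: "E \<subseteq> cube n"
  shows "kappa1 n f E \<le> 1"
proof -
  define A :: "bool list \<Rightarrow> real" where "A x = of_bool (out < n \<longrightarrow> x ! out)" for x
  define B :: "bool list \<Rightarrow> real" where "B y = of_bool (n \<le> out \<longrightarrow> out < 2 * n \<and> y ! (out - n))" for y
  have "of_bool (f x y) = A x * B y" if x: "x \<in> cube n" and y: "y \<in> cube n" for x y
  proof -
    let ?s = "x @ y @ replicate (m - length x - length y) False"
    have s: "?s \<in> cube m"
      using comp x y by (simp add: computes_def cube_def)
    have "2/3 \<le> meas_prob m out (init_state m x y) (f x y)"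
      using comp x y by (simp add: computes_def)
    then have "?s ! out = f x y"
      unfolding init_state_eq_basis_state meas_prob_basis_state[OF s] by (simp add: of_bool_def split: if_splits)
    moreover have "?s ! out = (if out < n then x ! out else out < 2 * n \<and> y ! (out - n))"
      using x y comp by (auto simp: cube_def nth_append computes_def)
    ultimately show ?thesis
      by (auto simp: A_def B_def)
  qed
  moreover have "nu_bounded n \<bar>1\<bar> (\<lambda>x y. 1 * A x * B y)"
    by (rule nu_bounded_rect) (simp_all add: A_def B_def)
  ultimately have "nu_bounded n 1 (\<lambda>x y. of_bool (f x y))"
    by (auto elim: nu_bounded_cong)
  then show ?thesis
    unfolding kappa1_eq_fourier_diag by (rule nu_bounded_sum_abs_fourier_diag[OF _ E])
qed

definition id_op :: qop where
  "id_op b b' = of_bool (b = b')"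

definition oracle_op :: "nat \<Rightarrow> (bool list \<Rightarrow> bool list \<Rightarrow> bool) \<Rightarrow> qop" where
  "oracle_op n f b b' = of_bool (b = b'[2 * n := (b' ! (2 * n) \<noteq> f (take n b') (take n (drop n b')))])"

lemma unitary_op_involution:
  assumes "\<And>b. b \<in> cube m \<Longrightarrow> \<pi> b \<in> cube m" and "\<And>b. b \<in> cube m \<Longrightarrow> \<pi> (\<pi> b) = b"
  shows "unitary_op m (\<lambda>b b'. of_bool (b = \<pi> b'))"
  unfolding unitary_op_def
proof (intro ballI)
  fix b b' assume "b \<in> cube m" "b' \<in> cube m"
  then have "\<pi> b = \<pi> b' \<longleftrightarrow> b = b'"
    by (metis assms(2))
  have "(\<Sum>c\<in>cube m. cnj (of_bool (c = \<pi> b)) * of_bool (c = \<pi> b'))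
      = (\<Sum>c\<in>cube m. if c = \<pi> b then of_bool (\<pi> b = \<pi> b') else 0)"
    by (rule sum.cong) auto
  also have "\<dots> = (if b = b' then 1 else 0)"
    using assms(1) \<open>b \<in> cube m\<close> \<open>\<pi> b = \<pi> b' \<longleftrightarrow> b = b'\<close> by simp
  finally show "(\<Sum>c\<in>cube m. cnj (of_bool (c = \<pi> b)) * of_bool (c = \<pi> b')) = (if b = b' then 1 else 0)" .
qed

lemma unitary_op_id_op: "unitary_op m id_op"
  using unitary_op_involution[of m "\<lambda>b. b"] by (simp add: id_op_def[abs_def])

lemma unitary_op_oracle_op:
  assumes "2 * n < m"
  shows "unitary_op m (oracle_op n f)"
proof -
  define \<pi> where "\<pi> b = b[2 * n := (b ! (2 * n) \<noteq> f (take n b) (take n (drop n b)))]" for b :: "bool list"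
  have involution: "\<pi> (\<pi> b) = b" if "b \<in> cube m" for b
    using that assms by (cases "b ! (2 * n)") (simp_all add: \<pi>_def cube_def list_update_same_conv take_update_cancel drop_update_swap)
  have "\<pi> b \<in> cube m" if "b \<in> cube m" for b
    using that by (simp add: \<pi>_def cube_def)
  from this involution show ?thesis
    unfolding oracle_op_def[abs_def] \<pi>_def[symmetric] by (rule unitary_op_involution)
qed

lemma cube_eq_iff: "b \<in> cube m \<Longrightarrow> b' \<in> cube m \<Longrightarrow> b = b' \<longleftrightarrow> (\<forall>i<m. b ! i = b' ! i)"
  by (auto simp: cube_def list_eq_iff_nth_eq)

lemma local_op_id_op: "local_op m S id_op"
  unfolding local_op_def
proof (intro conjI ballI impI)
  fix b b' :: "bool list"
  assume "\<exists>i<m. i \<notin> S \<and> b ! i \<noteq> b' ! i"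
  then show "id_op b b' = 0"
    by (auto simp: id_op_def)
next
  fix b b' c c' :: "bool list"
  assume "b \<in> cube m" "b' \<in> cube m" "c \<in> cube m" "c' \<in> cube m"
    and agree: "(\<forall>i\<in>S. b ! i = c ! i \<and> b' ! i = c' ! i) \<and> (\<forall>i<m. i \<notin> S \<longrightarrow> b ! i = b' ! i \<and> c ! i = c' ! i)"
  moreover have "b ! i = b' ! i \<longleftrightarrow> c ! i = c' ! i" if "i < m" for i
    using agree that by (cases "i \<in> S") auto
  ultimately show "id_op b b' = id_op c c'"
    unfolding id_op_def by (simp add: cube_eq_iff)
qed

lemma local_op_all: "local_op m {0..<m} U"
  unfolding local_op_def
proof (intro conjI ballI impI)
  fix b b' c c' :: "bool list"
  assume "b \<in> cube m" "b' \<in> cube m" "c \<in> cube m" "c' \<in> cube m"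
    and "(\<forall>i\<in>{0..<m}. b ! i = c ! i \<and> b' ! i = c' ! i) \<and> (\<forall>i<m. i \<notin> {0..<m} \<longrightarrow> b ! i = b' ! i \<and> c ! i = c' ! i)"
  then have "b = c" "b' = c'"
    by (simp_all add: cube_eq_iff)
  then show "U b b' = U c c'"
    by simp
qed auto

lemma apply_op_id_op:
  assumes "\<And>c. c \<notin> cube m \<Longrightarrow> \<psi> c = 0"
  shows "apply_op m id_op \<psi> = \<psi>"
proof
  fix c
  have "apply_op m id_op \<psi> c = (\<Sum>c'\<in>cube m. if c = c' then \<psi> c' else 0)"
    unfolding apply_op_def id_op_def by (rule sum.cong) auto
  then show "apply_op m id_op \<psi> c = \<psi> c"
    using assms by (simp add: sum.delta)
qed

lemma valid_rounds_send_all: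
  "distinct is \<Longrightarrow> set is \<subseteq> {0..<m} \<Longrightarrow> valid_rounds m {} rs \<Longrightarrow>
   valid_rounds m (set is) (map (\<lambda>i. (True, id_op, i)) is @ rs)"
  by (induction "is") (auto simp: unitary_op_id_op local_op_id_op)

lemma run_rounds_send_all:
  "(\<And>c. c \<notin> cube m \<Longrightarrow> \<psi> c = 0) \<Longrightarrow> run_rounds m (map (\<lambda>i. (True, id_op, i)) is @ rs) \<psi> = run_rounds m rs \<psi>"
  by (induction "is") (auto simp: apply_op_id_op)

text \<open>Alice sends her input qubits to Bob, who writes \<open>f x y\<close> into a fresh qubit.\<close>

lemma exists_protocol: "\<exists>m A0 rs out. computes n f m A0 rs out"
proof -
  define m where "m = 2 * n + 1"
  define rs where "rs = map (\<lambda>i. (True, id_op, i)) [0..<n] @ [(False, oracle_op n f, 2 * n)]"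
  have "valid_rounds m {} [(False, oracle_op n f, 2 * n)]"
    using unitary_op_oracle_op[of n m f] local_op_all[of m] by (simp add: m_def)
  then have "valid_rounds m {0..<n} rs"
    using valid_rounds_send_all[of "[0..<n]" m] by (simp add: rs_def m_def)
  moreover have "meas_prob m (2 * n) (run_rounds m rs (init_state m x y)) (f x y) = 1"
    if x: "x \<in> cube n" and y: "y \<in> cube n" for x y
  proof -
    let ?s = "x @ y @ replicate (m - length x - length y) False"
    let ?t = "?s[2 * n := f x y]"
    have s: "?s \<in> cube m" "?s ! (2 * n) = False" "take n ?s = x" "take n (drop n ?s) = y"
      using x y by (auto simp: m_def cube_def nth_append)
    have "run_rounds m rs (init_state m x y) = apply_op m (oracle_op n f) (init_state m x y)"
      unfolding rs_def using s(1) by (subst run_rounds_send_all) (auto simp: init_state_def)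
    also have "\<dots> = (\<lambda>c. of_bool (c = ?t))"
      using s by (simp add: init_state_eq_basis_state apply_op_basis_state oracle_op_def)
    finally show ?thesis
      using s(1) by (simp add: meas_prob_basis_state m_def cube_def)
  qed
  ultimately have "computes n f m {0..<n} rs (2 * n)"
    unfolding computes_def by (auto simp: m_def)
  then show ?thesis
    by blast
qed

lemma BQC_attained: "\<exists>m A0 rs out. computes n f m A0 rs out \<and> length rs = BQC n f"
  unfolding BQC_def using exists_protocol by (auto intro: LeastI_ex)

section \<open>Lower bounds on the communication complexity\<close>

lemma kappa1_le_BQC:
  assumes "E \<subseteq> cube n"
  shows "kappa1 n f E \<le> 2 ^ (36 * (BQC n f + 1) * s) + sqrt (kappa0 E) / 2 ^ s"
proof -
  obtain m A0 rs out where comp: "computes n f m A0 rs out" and len: "length rs = BQC n f"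
    using BQC_attained by blast
  let ?t = "BQC n f"
  have "(1 :: real) \<le> 4 ^ ?t"
    by simp
  then have "(4 * 4 ^ ?t + 1 :: real) \<le> 8 * 4 ^ ?t"
    by linarith
  also have "\<dots> = 2 ^ (2 * ?t + 3)"
    by (simp add: power_add power_mult)
  finally have "(4 * 4 ^ ?t + 1 :: real) ^ (2 * (6 * s)) \<le> (2 ^ (2 * ?t + 3)) ^ (2 * (6 * s))"
    by (intro power_mono) simp_all
  also have "\<dots> \<le> 2 ^ (36 * (?t + 1) * s)"
    unfolding power_mult[symmetric] by (intro power_increasing) simp_all
  finally have main: "(4 * 4 ^ ?t + 1 :: real) ^ (2 * (6 * s)) \<le> 2 ^ (36 * (?t + 1) * s)" .
  have "((8::real) / 9) ^ (6 * s) \<le> (1 / 2) ^ s"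
    unfolding power_mult by (intro power_mono) (simp_all add: power_divide)
  then have "(8/9) ^ (6 * s) * sqrt (kappa0 E) \<le> (1 / 2) ^ s * sqrt (kappa0 E)"
    by (rule mult_right_mono) (simp add: kappa0_def)
  also have "\<dots> = sqrt (kappa0 E) / 2 ^ s"
    by (simp add: power_divide)
  finally show ?thesis
    using main kappa1_le_protocol[OF comp assms, of "6 * s", unfolded len] by linarith
qed

lemma BQC_pos:
  assumes "E \<subseteq> cube n" and "1 < kappa1 n f E"
  shows "0 < BQC n f"
proof (rule ccontr)
  assume "\<not> 0 < BQC n f"
  then obtain m A0 out where "computes n f m A0 [] out"
    using BQC_attained[of n f] by auto
  then have "kappa1 n f E \<le> 1"
    using assms(1) by (rule kappa1_le_1_if_no_rounds)
  then show False
    using assms(2) by simp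
qed

lemma log_kappa1_le_BQC:
  assumes E: "E \<subseteq> cube n" and K: "1 < kappa1 n f E" and "0 < s"
    and R: "sqrt (kappa0 E) / 2 ^ s \<le> kappa1 n f E / 2"
  shows "log 2 (kappa1 n f E) \<le> 73 * real s * BQC n f"
proof -
  let ?K = "kappa1 n f E" and ?t = "BQC n f"
  have "?K \<le> 2 * 2 ^ (36 * (?t + 1) * s)"
    using kappa1_le_BQC[OF E, of f s] R by linarith
  then have "log 2 ?K \<le> log 2 (2 ^ (36 * (?t + 1) * s + 1))"
    using K by (intro log_mono) simp_all
  also have "\<dots> = real (36 * (?t + 1) * s + 1)"
    by (rule log_pow_cancel) simp_all
  also have "\<dots> \<le> real (73 * s * ?t)"
  proof -
    have "s * 1 \<le> s * ?t"
      using BQC_pos[OF E K] by (intro mult_le_mono2) simp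
    moreover have "36 * (?t + 1) * s + 1 = 36 * (s * ?t) + 36 * s + 1" "73 * s * ?t = 73 * (s * ?t)"
      by (simp_all add: algebra_simps)
    ultimately show ?thesis
      using \<open>0 < s\<close> by (simp only: of_nat_le_iff)
  qed
  finally show ?thesis
    by simp
qed

lemma log2_nonpos:
  fixes x :: real
  assumes "0 \<le> x" and "x \<le> 1"
  shows "log 2 x \<le> 0"
proof (cases "x = 0")
  case True
  then show ?thesis by (simp add: log_def)
next
  case False
  then show ?thesis using assms by simp
qed

lemma log_kappa1_le_BQC_large:
  assumes E: "E \<subseteq> cube n" and "c > 0" and large: "c * sqrt (kappa0 E) \<le> kappa1 n f E" and "2 / c < 2 ^ s"
  shows "log 2 (kappa1 n f E) \<le> 73 * real (Suc s) * BQC n f"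
proof (cases "kappa1 n f E \<le> 1")
  case True
  then have "log 2 (kappa1 n f E) \<le> 0"
    using kappa1_nonneg by (rule log2_nonpos[rotated])
  then show ?thesis
    by (meson of_nat_0_le_iff order_trans mult_nonneg_nonneg zero_le_numeral)
next
  case False
  have "1 / c \<le> 2 ^ s"
    using \<open>2 / c < 2 ^ s\<close> \<open>c > 0\<close> by (simp add: field_simps)
  have "sqrt (kappa0 E) \<le> kappa1 n f E * (1 / c)"
    using large \<open>c > 0\<close> by (simp add: field_simps)
  also have "\<dots> \<le> kappa1 n f E * 2 ^ s"
    using \<open>1 / c \<le> 2 ^ s\<close> kappa1_nonneg by (rule mult_left_mono)
  finally have "sqrt (kappa0 E) / 2 ^ Suc s \<le> kappa1 n f E / 2"
    by (simp add: field_simps)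
  from log_kappa1_le_BQC[OF E _ _ this] False show ?thesis
    by simp
qed

lemma BQC_lower_bound_large_kappa1:
  assumes "c > 0"
  shows "\<exists>C>0. \<forall>n f E. E \<subseteq> cube n \<longrightarrow> kappa1 n f E \<ge> c * sqrt (kappa0 E) \<longrightarrow>
           real (BQC n f) \<ge> C * log 2 (kappa1 n f E)"
proof -
  obtain s :: nat where "2 / c < 2 ^ s"
    using real_arch_pow[of 2 "2 / c"] by auto
  then show ?thesis
    using log_kappa1_le_BQC_large[OF _ assms]
    by (intro exI[of _ "1 / (73 * real (Suc s))"]) (simp add: field_simps del: of_nat_Suc)
qed

lemma exists_power_of_two_scale:
  fixes K R :: real
  assumes "1 < K" and "K \<le> R"
  shows "\<exists>s. 0 < s \<and> R / 2 ^ s \<le> K / 2 \<and> real s \<le> log 2 R - log 2 K + 2"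
proof -
  define u where "u = log 2 R - log 2 K"
  have "0 \<le> u"
    using assms by (simp add: u_def)
  define s where "s = nat \<lceil>u\<rceil> + 1"
  have s: "u + 1 \<le> s" "s \<le> u + 2"
    using \<open>0 \<le> u\<close> by (simp_all add: s_def) linarith+
  have "R / 2 ^ s = 2 powr (log 2 R - s)"
    using assms by (simp add: powr_diff powr_realpow)
  also have "\<dots> \<le> 2 powr (log 2 K - 1)"
    using s(1) by (intro powr_mono) (simp_all add: u_def)
  also have "\<dots> = K / 2"
    using assms by (simp add: powr_diff)
  finally show ?thesis
    using s(2) by (intro exI[of _ s]) (simp add: s_def u_def)
qed

lemma log_kappa1_ratio_le_BQC:
  assumes E: "E \<subseteq> cube n"
  shows "log 2 (kappa1 n f E) / (log 2 (sqrt (kappa0 E)) - log 2 (kappa1 n f E) + 1) \<le> 146 * real (BQC n f)"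
proof -
  define K where "K = kappa1 n f E"
  define R where "R = sqrt (kappa0 E)"
  have "0 \<le> K" "K \<le> R"
    using kappa1_nonneg kappa1_le_sqrt_kappa0[OF E] by (simp_all add: K_def R_def)
  consider "K = 0" | "0 < K" "K \<le> 1" | "1 < K"
    using \<open>0 \<le> K\<close> by linarith
  then have "log 2 K / (log 2 R - log 2 K + 1) \<le> 146 * real (BQC n f)"
  proof cases
    case 1
    then show ?thesis by (simp add: log_def)
  next
    case 2
    then have "log 2 K \<le> 0" and "log 2 K \<le> log 2 R"
      using \<open>K \<le> R\<close> by simp_all
    then have "log 2 K / (log 2 R - log 2 K + 1) \<le> 0"
      by (intro divide_nonpos_pos) simp_all
    then show ?thesis
      by (meson of_nat_0_le_iff order_trans mult_nonneg_nonneg zero_le_numeral)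
  next
    case 3
    have "log 2 K \<le> log 2 R"
      using 3 \<open>K \<le> R\<close> by simp
    obtain s where "0 < s" "R / 2 ^ s \<le> K / 2" and s: "real s \<le> log 2 R - log 2 K + 2"
      using exists_power_of_two_scale 3 \<open>K \<le> R\<close> by blast
    then have "log 2 K \<le> 73 * real s * BQC n f"
      using 3 unfolding K_def R_def by (intro log_kappa1_le_BQC[OF E])
    also have "\<dots> \<le> 146 * real (BQC n f) * (log 2 R - log 2 K + 1)"
    proof -
      have "real s \<le> 2 * (log 2 R - log 2 K + 1)"
        using s \<open>log 2 K \<le> log 2 R\<close> by (simp add: algebra_simps)
      then have "73 * real s * BQC n f \<le> 73 * (2 * (log 2 R - log 2 K + 1)) * BQC n f"
        by (intro mult_right_mono mult_left_mono) simp_all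
      then show ?thesis
        by (simp add: algebra_simps)
    qed
    finally show ?thesis
      using \<open>log 2 K \<le> log 2 R\<close> by (simp add: pos_divide_le_eq)
  qed
  then show ?thesis
    by (simp add: K_def R_def)
qed

lemma BQC_lower_bound_small_kappa1:
  "\<exists>C>0. \<forall>n f E. E \<subseteq> cube n \<longrightarrow>
     real (BQC n f) \<ge> C * (log 2 (kappa1 n f E) / (log 2 (sqrt (kappa0 E)) - log 2 (kappa1 n f E) + 1))"
proof -
  let ?ratio = "\<lambda>n f E. log 2 (kappa1 n f E) / (log 2 (sqrt (kappa0 E)) - log 2 (kappa1 n f E) + 1)"
  have "1 / 146 * ?ratio n f E \<le> BQC n f" if "E \<subseteq> cube n" for n f E
    using log_kappa1_ratio_le_BQC[OF that, of f] by linarith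
  then show ?thesis
    by (intro exI[of _ "1 / 146"]) auto
qed

text \<open>The second bound holds without the hypothesis \<open>kappa1 n f E \<le> c * sqrt (kappa0 E)\<close>.\<close>

theorem theorem4p1:
  shows "(\<forall>c>0. \<exists>C>0. \<exists>N. \<forall>n\<ge>N. \<forall>f E. E \<subseteq> cube n \<longrightarrow>
            kappa1 n f E \<ge> c * sqrt (kappa0 E) \<longrightarrow>
            real (BQC n f) \<ge> C * log 2 (kappa1 n f E))
       \<and> (\<forall>c>0. \<exists>C>0. \<exists>N. \<forall>n\<ge>N. \<forall>f E. E \<subseteq> cube n \<longrightarrow>
            kappa1 n f E \<le> c * sqrt (kappa0 E) \<longrightarrow>
            real (BQC n f) \<ge> C * (log 2 (kappa1 n f E) /
               (log 2 (sqrt (kappa0 E)) - log 2 (kappa1 n f E) + 1)))"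
  using BQC_lower_bound_large_kappa1 BQC_lower_bound_small_kappa1 by (meson order_refl)

end
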